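(* Let $X$ be a Stone space and $G$ a topological subgroup of $\mathrm{Homeo}(X)$. Then: (1) the action $\alpha:G\times V\to V$, $\alpha(g,A)=g(A)$, induces a topological group embedding $i_\alpha:G\hookrightarrow \mathrm{Aut}(V)$; (2) the evaluation map $\delta:X\to V^*$, $x\mapsto\delta_x$, $\delta_x(f)=f(x)$, is a topological embedding which is $G$-equivariant (with respect to the action $\beta$ below); (3) the action $\beta:G\times V^*\to V^*$, $(gf)(A)=f(g^{-1}(A))$, is continuous and induces a topological group embedding $i_\beta:G\hookrightarrow\mathrm{Aut}(V^* )$; (4) the pair $\psi=(\alpha,\beta)$ is a $t$-exact birepresentation of $G$ on the evaluation map $w:V\times V^*\to\mathbb{Z}_2$, $w(A,f)=f(A)$.
   Context: A Stone space is a compact zero-dimensional Hausdorff space; $\mathrm{Homeo}(X)$ carries the compact-open topology. $V=C(X,\mathbb{Z}_2)$, identified with the group of clopen subsets of $X$ under symmetric difference, is discrete; $V^*=\mathrm{Hom}(V,\mathbb{Z}_2)$ carries the topology of pointwise convergence (compact). For a locally compact group $Y$, $\mathrm{Aut}(Y)$ carries the Birkhoff topology, with local base at the identity the sets $\{f\in\mathrm{Aut}(Y): f(y)\in Oy,\ f^{-1}(y)\in Oy\ \forall y\in K\}$ ($K$ compact, $O$ a neighborhood of the identity); for discrete $Y$ it is the pointwise topology and for compact $Y$ the compact-open topology. Given a continuous biadditive map $w:E\times F\to A$ of abelian topological groups, a continuous birepresentation of a topological group $G$ on $w$ is a pair $(\alpha_1,\alpha_2)$ of continuous actions of $G$ by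 automorphisms on $E$ and on $F$ with $w(gx,gf)=w(x,f)$. It is $t$-exact if $\ker\alpha_1\cap\ker\alpha_2=\{e\}$ and for no strictly coarser Hausdorff group topology on $G$ do both actions remain continuous. *)

theory Defs
  imports "HOL-Analysis.Analysis"
begin

definition stone_space :: "'a topology \<Rightarrow> bool" where
  "stone_space T \<longleftrightarrow> compact_space T \<and> Hausdorff_space T \<and>
     (\<forall>U x. openin T U \<and> x \<in> U \<longrightarrow>
        (\<exists>C. openin T C \<and> closedin T C \<and> x \<in> C \<and> C \<subseteq> U))"

text \<open>Homeo(X): homeomorphisms of the topspace, extended by the identity outside it.\<close>
definition Homeo :: "'a topology \<Rightarrow> ('a \<Rightarrow> 'a) set" where
  "Homeo T = {g. homeomorphic_map T T g \<and> (\<forall>x. x \<notin> topspace T \<longrightarrow> g x = x)}"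

definition compact_open_homeo :: "'a topology \<Rightarrow> ('a \<Rightarrow> 'a) topology" where
  "compact_open_homeo T = topology_generated_by
     {{g \<in> Homeo T. g ` K \<subseteq> U} | K U. compactin T K \<and> openin T U}"

definition topological_subgroup_Homeo :: "'a topology \<Rightarrow> ('a \<Rightarrow> 'a) set \<Rightarrow> bool" where
  "topological_subgroup_Homeo T G \<longleftrightarrow> G \<subseteq> Homeo T \<and> id \<in> G \<and>
     (\<forall>g\<in>G. \<forall>h\<in>G. g \<circ> h \<in> G) \<and> (\<forall>g\<in>G. inv g \<in> G)"

definition Gtop :: "'a topology \<Rightarrow> ('a \<Rightarrow> 'a) set \<Rightarrow> ('a \<Rightarrow> 'a) topology" where
  "Gtop T G = subtopology (compact_open_homeo T) G"

section \<open>V = C(X,Z2) as clopen sets, and its dual V*\<close>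

definition symdiff :: "'a set \<Rightarrow> 'a set \<Rightarrow> 'a set" where
  "symdiff A B = (A - B) \<union> (B - A)"

definition clopens :: "'a topology \<Rightarrow> 'a set set" where
  "clopens T = {A. openin T A \<and> closedin T A}"

text \<open>Z2 is modelled as bool with addition = exclusive or.\<close>
definition dualV :: "'a topology \<Rightarrow> ('a set \<Rightarrow> bool) set" where
  "dualV T = {f. (\<forall>A\<in>clopens T. \<forall>B\<in>clopens T. f (symdiff A B) = (f A \<noteq> f B)) \<and>
                 (\<forall>A. A \<notin> clopens T \<longrightarrow> f A = False)}"

definition dualV_top :: "'a topology \<Rightarrow> ('a set \<Rightarrow> bool) topology" where
  "dualV_top T = topology_generated_by
     {{f \<in> dualV T. f A = b} | A b. A \<in> clopens T}"

definition Vtop :: "'a topology \<Rightarrow> 'a set topology" where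
  "Vtop T = discrete_topology (clopens T)"

definition dual_add :: "('a set \<Rightarrow> bool) \<Rightarrow> ('a set \<Rightarrow> bool) \<Rightarrow> ('a set \<Rightarrow> bool)" where
  "dual_add f h = (\<lambda>A. f A \<noteq> h A)"

text \<open>Aut(Y) for an abelian topological group Y with carrier topspace Y, operation mul:
  topological group automorphisms, extended by the identity outside the carrier.\<close>
definition Aut :: "'y topology \<Rightarrow> ('y \<Rightarrow> 'y \<Rightarrow> 'y) \<Rightarrow> ('y \<Rightarrow> 'y) set" where
  "Aut Y mul = {f. homeomorphic_map Y Y f \<and>
      (\<forall>x\<in>topspace Y. \<forall>y\<in>topspace Y. f (mul x y) = mul (f x) (f y)) \<and>
      (\<forall>y. y \<notin> topspace Y \<longrightarrow> f y = y)}"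

definition birkhoff_nbhd :: "'y topology \<Rightarrow> ('y \<Rightarrow> 'y \<Rightarrow> 'y) \<Rightarrow> 'y set \<Rightarrow> 'y set \<Rightarrow> ('y \<Rightarrow> 'y) set" where
  "birkhoff_nbhd Y mul K W = {f \<in> Aut Y mul. \<forall>y\<in>K.
      f y \<in> (\<lambda>u. mul u y) ` W \<and> inv f y \<in> (\<lambda>u. mul u y) ` W}"

definition birkhoff_top :: "'y topology \<Rightarrow> ('y \<Rightarrow> 'y \<Rightarrow> 'y) \<Rightarrow> 'y \<Rightarrow> ('y \<Rightarrow> 'y) topology" where
  "birkhoff_top Y mul e = topology_generated_by
     {(\<lambda>f. h \<circ> f) ` birkhoff_nbhd Y mul K W | h K W.
        h \<in> Aut Y mul \<and> compactin Y K \<and> openin Y W \<and> e \<in> W}"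

definition top_group_embedding ::
  "('g \<Rightarrow> 'g) topology \<Rightarrow> ('h \<Rightarrow> 'h) topology \<Rightarrow> (('g \<Rightarrow> 'g) \<Rightarrow> ('h \<Rightarrow> 'h)) \<Rightarrow> bool" where
  "top_group_embedding TG TH i \<longleftrightarrow>
     (\<forall>g\<in>topspace TG. \<forall>h\<in>topspace TG. i (g \<circ> h) = i g \<circ> i h) \<and>
     embedding_map TG TH i"

definition act_alpha :: "'a topology \<Rightarrow> ('a \<Rightarrow> 'a) \<Rightarrow> 'a set \<Rightarrow> 'a set" where
  "act_alpha T g A = (if A \<in> clopens T then g ` A else A)"

definition act_beta :: "'a topology \<Rightarrow> ('a \<Rightarrow> 'a) \<Rightarrow> ('a set \<Rightarrow> bool) \<Rightarrow> ('a set \<Rightarrow> bool)" where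
  "act_beta T g f = (if f \<in> dualV T then (\<lambda>A. if A \<in> clopens T then f (inv g ` A) else False) else f)"

definition delta :: "'a topology \<Rightarrow> 'a \<Rightarrow> ('a set \<Rightarrow> bool)" where
  "delta T x = (\<lambda>A. if A \<in> clopens T then x \<in> A else False)"

definition eval_w :: "'a set \<Rightarrow> ('a set \<Rightarrow> bool) \<Rightarrow> bool" where
  "eval_w A f = f A"

definition hausdorff_group_topology :: "('g \<Rightarrow> 'g) set \<Rightarrow> ('g \<Rightarrow> 'g) topology \<Rightarrow> bool" where
  "hausdorff_group_topology G \<tau> \<longleftrightarrow> topspace \<tau> = G \<and> Hausdorff_space \<tau> \<and>
     continuous_map (prod_topology \<tau> \<tau>) \<tau> (\<lambda>(g,h). g \<circ> h) \<and>
     continuous_map \<tau> \<tau> inv"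

definition cont_action_aut ::
  "('g \<Rightarrow> 'g) topology \<Rightarrow> 'e topology \<Rightarrow> ('e \<Rightarrow> 'e \<Rightarrow> 'e) \<Rightarrow> (('g \<Rightarrow> 'g) \<Rightarrow> 'e \<Rightarrow> 'e) \<Rightarrow> bool" where
  "cont_action_aut \<tau> E addE act \<longleftrightarrow>
     continuous_map (prod_topology \<tau> E) E (\<lambda>(g,x). act g x) \<and>
     (\<forall>x\<in>topspace E. act id x = x) \<and>
     (\<forall>g\<in>topspace \<tau>. \<forall>h\<in>topspace \<tau>. \<forall>x\<in>topspace E. act (g \<circ> h) x = act g (act h x)) \<and>
     (\<forall>g\<in>topspace \<tau>. \<forall>x\<in>topspace E. \<forall>y\<in>topspace E. act g (addE x y) = addE (act g x) (act g y))"

definition cont_biadditive ::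
  "'e topology \<Rightarrow> ('e \<Rightarrow> 'e \<Rightarrow> 'e) \<Rightarrow> 'f topology \<Rightarrow> ('f \<Rightarrow> 'f \<Rightarrow> 'f) \<Rightarrow>
   'c topology \<Rightarrow> ('c \<Rightarrow> 'c \<Rightarrow> 'c) \<Rightarrow> ('e \<Rightarrow> 'f \<Rightarrow> 'c) \<Rightarrow> bool" where
  "cont_biadditive E addE F addF C addC w \<longleftrightarrow>
     continuous_map (prod_topology E F) C (\<lambda>(x,f). w x f) \<and>
     (\<forall>x\<in>topspace E. \<forall>y\<in>topspace E. \<forall>f\<in>topspace F. w (addE x y) f = addC (w x f) (w y f)) \<and>
     (\<forall>x\<in>topspace E. \<forall>f\<in>topspace F. \<forall>h\<in>topspace F. w x (addF f h) = addC (w x f) (w x h))"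

definition cont_birep ::
  "('g \<Rightarrow> 'g) topology \<Rightarrow> 'e topology \<Rightarrow> ('e \<Rightarrow> 'e \<Rightarrow> 'e) \<Rightarrow> 'f topology \<Rightarrow> ('f \<Rightarrow> 'f \<Rightarrow> 'f) \<Rightarrow>
   'c topology \<Rightarrow> ('c \<Rightarrow> 'c \<Rightarrow> 'c) \<Rightarrow> ('e \<Rightarrow> 'f \<Rightarrow> 'c) \<Rightarrow>
   (('g \<Rightarrow> 'g) \<Rightarrow> 'e \<Rightarrow> 'e) \<Rightarrow> (('g \<Rightarrow> 'g) \<Rightarrow> 'f \<Rightarrow> 'f) \<Rightarrow> bool" where
  "cont_birep \<tau> E addE F addF C addC w a1 a2 \<longleftrightarrow>
     cont_biadditive E addE F addF C addC w \<and>
     cont_action_aut \<tau> E addE a1 \<and> cont_action_aut \<tau> F addF a2 \<and>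
     (\<forall>g\<in>topspace \<tau>. \<forall>x\<in>topspace E. \<forall>f\<in>topspace F. w (a1 g x) (a2 g f) = w x f)"

definition t_exact_birep ::
  "('g \<Rightarrow> 'g) topology \<Rightarrow> 'e topology \<Rightarrow> ('e \<Rightarrow> 'e \<Rightarrow> 'e) \<Rightarrow> 'f topology \<Rightarrow> ('f \<Rightarrow> 'f \<Rightarrow> 'f) \<Rightarrow>
   'c topology \<Rightarrow> ('c \<Rightarrow> 'c \<Rightarrow> 'c) \<Rightarrow> ('e \<Rightarrow> 'f \<Rightarrow> 'c) \<Rightarrow>
   (('g \<Rightarrow> 'g) \<Rightarrow> 'e \<Rightarrow> 'e) \<Rightarrow> (('g \<Rightarrow> 'g) \<Rightarrow> 'f \<Rightarrow> 'f) \<Rightarrow> bool" where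
  "t_exact_birep \<tau> E addE F addF C addC w a1 a2 \<longleftrightarrow>
     cont_birep \<tau> E addE F addF C addC w a1 a2 \<and>
     {g \<in> topspace \<tau>. (\<forall>x\<in>topspace E. a1 g x = x) \<and> (\<forall>f\<in>topspace F. a2 g f = f)} = {id} \<and>
     \<not> (\<exists>\<sigma>. hausdorff_group_topology (topspace \<tau>) \<sigma> \<and>
           (\<forall>U. openin \<sigma> U \<longrightarrow> openin \<tau> U) \<and> \<sigma> \<noteq> \<tau> \<and>
           continuous_map (prod_topology \<sigma> E) E (\<lambda>(g,x). a1 g x) \<and>
           continuous_map (prod_topology \<sigma> F) F (\<lambda>(g,f). a2 g f))"

end

theory Submission
  imports Defs
begin

(*
  Everything rests on one observation (openin_Gtop_iff): because X is compact with a base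
  of clopen sets, a compact subset of an open set lies in a clopen set in between, so the
  compact-open topology of G has the neighbourhood base
      G_nbhd g F = {g' in G. g'(A) = g(A) for all A in F},   F a finite set of clopens.
  With this base, continuity of alpha and beta and of the maps into the Birkhoff
  topologies is checked on finitely many clopens; for beta on compact sets of V* this
  needs a Lebesgue-number argument and the uniform continuity of automorphisms of V*.
  Conversely, any group topology making alpha continuous contains the sets
  {g. g(A) = B}, hence all G_nbhd g F; this gives the minimality part of t-exactness.
*)

lemma continuous_map_into_discrete_topology:
  assumes "\<And>x. x \<in> topspace X \<Longrightarrow> f x \<in> S"
    and "\<And>x. x \<in> topspace X \<Longrightarrow> \<exists>U. openin X U \<and> x \<in> U \<and> (\<forall>x'\<in>U. f x' = f x)"
  shows "continuous_map X (discrete_topology S) f"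
  unfolding continuous_map_def
proof (intro conjI allI impI)
  show "f \<in> topspace X \<rightarrow> topspace (discrete_topology S)"
    using assms(1) by (simp add: Pi_iff)
  fix V
  show "openin X {x \<in> topspace X. f x \<in> V}"
  proof (subst openin_subopen, intro ballI)
    fix x assume x: "x \<in> {x \<in> topspace X. f x \<in> V}"
    then obtain U where U: "openin X U" "x \<in> U" "\<forall>x'\<in>U. f x' = f x"
      using assms(2) by blast
    have "U \<subseteq> {x \<in> topspace X. f x \<in> V}"
    proof
      fix x' assume "x' \<in> U"
      then have "x' \<in> topspace X" "f x' = f x"
        using U openin_subset by blast+
      then show "x' \<in> {x \<in> topspace X. f x \<in> V}" using x by simp
    qed
    then show "\<exists>U. openin X U \<and> x \<in> U \<and> U \<subseteq> {x \<in> topspace X. f x \<in> V}"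
      using U by blast
  qed
qed

lemma embedding_map_by_local_openness:
  assumes cont: "continuous_map X Y f" and inj: "inj_on f (topspace X)"
    and local_open: "\<And>U x. openin X U \<Longrightarrow> x \<in> U \<Longrightarrow>
       \<exists>V. openin Y V \<and> f x \<in> V \<and> (\<forall>x'\<in>topspace X. f x' \<in> V \<longrightarrow> x' \<in> U)"
  shows "embedding_map X Y f"
proof -
  let ?Y = "subtopology Y (f ` topspace X)"
  have "open_map X ?Y f"
    unfolding open_map_def
  proof (intro allI impI)
    fix U assume U: "openin X U"
    show "openin ?Y (f ` U)"
    proof (subst openin_subopen, intro ballI)
      fix y assume "y \<in> f ` U"
      then obtain x where x: "x \<in> U" "y = f x" by blast
      obtain V where V: "openin Y V" "f x \<in> V" "\<forall>x'\<in>topspace X. f x' \<in> V \<longrightarrow> x' \<in> U"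
        using local_open[OF U x(1)] by blast
      have "openin ?Y (V \<inter> f ` topspace X)"
        using V(1) openin_subtopology by blast
      moreover have "y \<in> V \<inter> f ` topspace X" "V \<inter> f ` topspace X \<subseteq> f ` U"
        using x V openin_subset[OF U] by blast+
      ultimately show "\<exists>V'. openin ?Y V' \<and> y \<in> V' \<and> V' \<subseteq> f ` U" by blast
    qed
  qed
  moreover have "continuous_map X ?Y f"
    using cont by (simp add: continuous_map_in_subtopology)
  moreover have "f ` topspace X = topspace ?Y"
    using continuous_map_image_subset_topspace[OF cont] by auto
  ultimately show ?thesis
    unfolding embedding_map_def using bijective_open_imp_homeomorphic_map inj by blast
qed

lemma generate_topology_on_local_base:
  assumes "generate_topology_on S U"
    and basis: "\<And>s x. s \<in> S \<Longrightarrow> x \<in> s \<Longrightarrow> P x \<Longrightarrow> \<exists>F. finite F \<and> F \<subseteq> C \<and> N x F \<subseteq> s"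
    and antimono: "\<And>x F F'. F \<subseteq> F' \<Longrightarrow> N x F' \<subseteq> N x F"
  shows "\<forall>x\<in>U. P x \<longrightarrow> (\<exists>F. finite F \<and> F \<subseteq> C \<and> N x F \<subseteq> U)"
  using assms(1)
proof (induction rule: generate_topology_on.induct)
  case (Int a b)
  show ?case
  proof (intro ballI impI)
    fix x assume x: "x \<in> a \<inter> b" "P x"
    obtain F1 where "finite F1" "F1 \<subseteq> C" "N x F1 \<subseteq> a"
      using Int.IH(1) x by blast
    moreover obtain F2 where "finite F2" "F2 \<subseteq> C" "N x F2 \<subseteq> b"
      using Int.IH(2) x by blast
    ultimately show "\<exists>F. finite F \<and> F \<subseteq> C \<and> N x F \<subseteq> a \<inter> b"
      using antimono[of F1 "F1 \<union> F2" x] antimono[of F2 "F1 \<union> F2" x]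
      by (intro exI[of _ "F1 \<union> F2"]) auto
  qed
next
  case (UN K)
  show ?case
  proof (intro ballI impI)
    fix x assume "x \<in> \<Union>K" "P x"
    then obtain k where k: "k \<in> K" "x \<in> k" by blast
    then obtain F where "finite F" "F \<subseteq> C" "N x F \<subseteq> k"
      using UN.IH[OF k(1)] \<open>P x\<close> by blast
    then show "\<exists>F. finite F \<and> F \<subseteq> C \<and> N x F \<subseteq> \<Union>K"
      using \<open>k \<in> K\<close> by blast
  qed
next
  case (Basis s)
  show ?case using basis[OF Basis] by blast
qed simp

lemma bij_if_homeomorphic_fixing_outside:
  assumes hom: "homeomorphic_map Y Y f" and outside: "\<And>y. y \<notin> topspace Y \<Longrightarrow> f y = y"
  shows "bij f"
proof -
  have "bij_betw f (topspace Y) (topspace Y)"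
    using homeomorphic_imp_injective_map[OF hom] homeomorphic_imp_surjective_map[OF hom]
    by (simp add: bij_betw_def)
  moreover have "bij_betw f (- topspace Y) (- topspace Y)"
    using bij_betw_cong[of "- topspace Y" f id] outside by simp
  ultimately have "bij_betw f (topspace Y \<union> - topspace Y) (topspace Y \<union> - topspace Y)"
    by (rule bij_betw_combine) blast
  then show ?thesis by simp
qed

section \<open>Automorphism groups and the Birkhoff topology\<close>

lemma Aut_homeomorphic: "f \<in> Aut Y mul \<Longrightarrow> homeomorphic_map Y Y f"
  unfolding Aut_def by blast

lemma Aut_fixes_outside: "f \<in> Aut Y mul \<Longrightarrow> y \<notin> topspace Y \<Longrightarrow> f y = y"
  unfolding Aut_def by blast

lemma Aut_additive:
  "f \<in> Aut Y mul \<Longrightarrow> x \<in> topspace Y \<Longrightarrow> y \<in> topspace Y \<Longrightarrow> f (mul x y) = mul (f x) (f y)"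
  unfolding Aut_def by blast

lemma Aut_bij: "f \<in> Aut Y mul \<Longrightarrow> bij f"
  by (rule bij_if_homeomorphic_fixing_outside[OF Aut_homeomorphic Aut_fixes_outside])

lemma Aut_inv_f [simp]: "f \<in> Aut Y mul \<Longrightarrow> inv f (f x) = x"
  by (meson Aut_bij bij_is_inj inv_f_f)

lemma Aut_f_inv [simp]: "f \<in> Aut Y mul \<Longrightarrow> f (inv f x) = x"
  by (meson Aut_bij bij_is_surj surj_f_inv_f)

lemma Aut_inv_eq: "f \<in> Aut Y mul \<Longrightarrow> f x = y \<Longrightarrow> inv f y = x"
  by (metis Aut_inv_f)

lemma Aut_maps_topspace: "f \<in> Aut Y mul \<Longrightarrow> y \<in> topspace Y \<Longrightarrow> f y \<in> topspace Y"
  using Aut_homeomorphic homeomorphic_imp_surjective_map by blast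

lemma Aut_continuous: "f \<in> Aut Y mul \<Longrightarrow> continuous_map Y Y f"
  using Aut_homeomorphic homeomorphic_imp_continuous_map by blast

lemma Aut_id: "id \<in> Aut Y mul"
  unfolding Aut_def by simp

lemma Aut_comp:
  assumes f: "f \<in> Aut Y mul" and h: "h \<in> Aut Y mul"
  shows "f \<circ> h \<in> Aut Y mul"
  unfolding Aut_def
proof (intro CollectI conjI ballI allI impI)
  show "homeomorphic_map Y Y (f \<circ> h)"
    using homeomorphic_map_compose[OF Aut_homeomorphic[OF h] Aut_homeomorphic[OF f]] .
  fix x y assume "x \<in> topspace Y" "y \<in> topspace Y"
  then show "(f \<circ> h) (mul x y) = mul ((f \<circ> h) x) ((f \<circ> h) y)"
    using Aut_additive[OF h] Aut_additive[OF f] Aut_maps_topspace[OF h] by simp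
next
  fix y assume "y \<notin> topspace Y"
  then show "(f \<circ> h) y = y"
    using Aut_fixes_outside[OF h] Aut_fixes_outside[OF f] by simp
qed

lemma Aut_inv:
  assumes f: "f \<in> Aut Y mul"
  shows "inv f \<in> Aut Y mul"
  unfolding Aut_def
proof (intro CollectI conjI ballI allI impI)
  obtain g where g: "homeomorphic_maps Y Y f g"
    using Aut_homeomorphic[OF f] homeomorphic_map_maps by blast
  have "g y = inv f y" if "y \<in> topspace Y" for y
  proof -
    have "f (g y) = y"
      using g that unfolding homeomorphic_maps_map by blast
    then show ?thesis
      using Aut_inv_f[OF f, of "g y"] by simp
  qed
  then show hom: "homeomorphic_map Y Y (inv f)"
    using homeomorphic_map_eq[of Y Y g "inv f"] g unfolding homeomorphic_maps_map by blast
  fix x y assume x: "x \<in> topspace Y" and y: "y \<in> topspace Y"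
  have "inv f x \<in> topspace Y" "inv f y \<in> topspace Y"
    using x y homeomorphic_imp_surjective_map[OF hom] by blast+
  then have "f (mul (inv f x) (inv f y)) = mul x y"
    using Aut_additive[OF f] Aut_f_inv[OF f] by simp
  then show "inv f (mul x y) = mul (inv f x) (inv f y)"
    using Aut_inv_f[OF f] by metis
next
  fix y assume "y \<notin> topspace Y"
  then show "inv f y = y"
    using Aut_fixes_outside[OF f] Aut_inv_f[OF f] by metis
qed

lemma topspace_birkhoff_top:
  assumes e: "e \<in> topspace Y"
  shows "topspace (birkhoff_top Y mul e) = Aut Y mul"
proof -
  let ?S = "{(\<lambda>f. h \<circ> f) ` birkhoff_nbhd Y mul K W | h K W.
        h \<in> Aut Y mul \<and> compactin Y K \<and> openin Y W \<and> e \<in> W}"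
  have "\<Union>?S \<subseteq> Aut Y mul"
    unfolding birkhoff_nbhd_def using Aut_comp by blast
  moreover have "Aut Y mul \<subseteq> \<Union>?S"
  proof
    fix k assume "k \<in> Aut Y mul"
    then have "k \<in> (\<lambda>f. id \<circ> f) ` birkhoff_nbhd Y mul {} (topspace Y)"
      unfolding birkhoff_nbhd_def by (intro rev_image_eqI[of k]) simp_all
    moreover have "(\<lambda>f. id \<circ> f) ` birkhoff_nbhd Y mul {} (topspace Y) \<in> ?S"
      using Aut_id[of Y mul] e compactin_empty[of Y] openin_topspace[of Y] by blast
    ultimately show "k \<in> \<Union>?S" by blast
  qed
  ultimately show ?thesis
    unfolding birkhoff_top_def topology_generated_by_topspace by (rule equalityI)
qed

lemma birkhoff_basis_open:
  "h \<in> Aut Y mul \<Longrightarrow> compactin Y K \<Longrightarrow> openin Y W \<Longrightarrow> e \<in> W \<Longrightarrow>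
   openin (birkhoff_top Y mul e) ((\<lambda>f. h \<circ> f) ` birkhoff_nbhd Y mul K W)"
  unfolding birkhoff_top_def by (rule topology_generated_by_Basis) blast

lemma continuous_map_into_birkhoff_top:
  assumes e: "e \<in> topspace Y" and into_Aut: "\<And>x. x \<in> topspace X \<Longrightarrow> F x \<in> Aut Y mul"
    and basis: "\<And>h K W. h \<in> Aut Y mul \<Longrightarrow> compactin Y K \<Longrightarrow> openin Y W \<Longrightarrow> e \<in> W \<Longrightarrow>
        openin X {x \<in> topspace X. F x \<in> (\<lambda>k. h \<circ> k) ` birkhoff_nbhd Y mul K W}"
  shows "continuous_map X (birkhoff_top Y mul e) F"
  unfolding birkhoff_top_def
proof (rule continuous_on_generated_topo)
  show "F ` topspace X \<subseteq> \<Union> {(\<lambda>f. h \<circ> f) ` birkhoff_nbhd Y mul K W | h K W.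
        h \<in> Aut Y mul \<and> compactin Y K \<and> openin Y W \<and> e \<in> W}"
    using topspace_birkhoff_top[OF e, of mul] into_Aut unfolding birkhoff_top_def by auto
  fix U assume "U \<in> {(\<lambda>f. h \<circ> f) ` birkhoff_nbhd Y mul K W | h K W.
        h \<in> Aut Y mul \<and> compactin Y K \<and> openin Y W \<and> e \<in> W}"
  then obtain h K W where "h \<in> Aut Y mul" "compactin Y K" "openin Y W" "e \<in> W"
    and U: "U = (\<lambda>f. h \<circ> f) ` birkhoff_nbhd Y mul K W" by blast
  then have "openin X {x \<in> topspace X. F x \<in> U}"
    using basis by blast
  moreover have "F -` U \<inter> topspace X = {x \<in> topspace X. F x \<in> U}" by blast
  ultimately show "openin X (F -` U \<inter> topspace X)" by simp
qed

lemma translate_image_iff: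
  assumes "bij h"
  shows "k \<in> (\<lambda>f. h \<circ> f) ` N \<longleftrightarrow> inv h \<circ> k \<in> N"
proof
  assume "k \<in> (\<lambda>f. h \<circ> f) ` N"
  then obtain f where "f \<in> N" "k = h \<circ> f" by blast
  then show "inv h \<circ> k \<in> N"
    using assms by (simp add: o_assoc bij_is_inj)
next
  assume "inv h \<circ> k \<in> N"
  moreover have "k = h \<circ> (inv h \<circ> k)"
    using assms by (simp add: fun_eq_iff bij_is_surj surj_f_inv_f)
  ultimately show "k \<in> (\<lambda>f. h \<circ> f) ` N" by blast
qed

lemma birkhoff_nbhd_involutive_iff:
  assumes "\<And>u y. mul (mul u y) y = u"
  shows "f \<in> birkhoff_nbhd Y mul K W \<longleftrightarrow>
           f \<in> Aut Y mul \<and> (\<forall>y\<in>K. mul (f y) y \<in> W \<and> mul (inv f y) y \<in> W)"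
proof -
  have "v \<in> (\<lambda>u. mul u y) ` W \<longleftrightarrow> mul v y \<in> W" for v y
  proof
    assume "v \<in> (\<lambda>u. mul u y) ` W"
    then show "mul v y \<in> W" using assms by auto
  next
    assume "mul v y \<in> W"
    then show "v \<in> (\<lambda>u. mul u y) ` W"
      by (rule rev_image_eqI) (simp add: assms)
  qed
  then show ?thesis
    unfolding birkhoff_nbhd_def by simp
qed

lemma birkhoff_nbhd_id:
  assumes "\<And>y. y \<in> K \<Longrightarrow> mul e y = y" and "e \<in> W"
  shows "id \<in> birkhoff_nbhd Y mul K W"
proof -
  have "y \<in> (\<lambda>u. mul u y) ` W" if "y \<in> K" for y
    by (rule rev_image_eqI[OF assms(2)]) (simp add: assms(1)[OF that])
  then show ?thesis
    unfolding birkhoff_nbhd_def by (simp add: Aut_id inv_id)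
qed

lemma birkhoff_translate_nbhd_iff:
  assumes involutive: "\<And>u y. mul (mul u y) y = u"
    and h: "h \<in> Aut Y mul" and a: "a \<in> Aut Y mul" and inverse: "\<And>x. a (a' x) = x"
  shows "inv h \<circ> a \<in> birkhoff_nbhd Y mul K W \<longleftrightarrow>
    (\<forall>y\<in>K. mul (inv h (a y)) y \<in> W \<and> mul (a' (h y)) y \<in> W)"
proof -
  have A: "inv h \<circ> a \<in> Aut Y mul"
    by (rule Aut_comp[OF Aut_inv[OF h] a])
  have "(inv h \<circ> a) (a' (h y)) = y" for y
    using inverse h by simp
  then have "inv (inv h \<circ> a) y = a' (h y)" for y
    by (rule Aut_inv_eq[OF A])
  moreover have "inv h \<circ> a \<in> birkhoff_nbhd Y mul K W \<longleftrightarrow> inv h \<circ> a \<in> Aut Y mul \<and>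
      (\<forall>y\<in>K. mul ((inv h \<circ> a) y) y \<in> W \<and> mul (inv (inv h \<circ> a) y) y \<in> W)"
    by (rule birkhoff_nbhd_involutive_iff[OF involutive])
  ultimately show ?thesis
    using A by simp
qed

locale stone_group =
  fixes T :: "'a topology" and G :: "('a \<Rightarrow> 'a) set"
  assumes stone: "stone_space T"
    and subgroup: "topological_subgroup_Homeo T G"
begin

lemma G_id: "id \<in> G"
  using subgroup unfolding topological_subgroup_Homeo_def by blast

lemma G_comp: "g \<in> G \<Longrightarrow> h \<in> G \<Longrightarrow> g \<circ> h \<in> G"
  using subgroup unfolding topological_subgroup_Homeo_def by blast

lemma G_inv: "g \<in> G \<Longrightarrow> inv g \<in> G"
  using subgroup unfolding topological_subgroup_Homeo_def by blast

lemma G_Homeo: "g \<in> G \<Longrightarrow> g \<in> Homeo T"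
  using subgroup unfolding topological_subgroup_Homeo_def by blast

lemma G_homeomorphic: "g \<in> G \<Longrightarrow> homeomorphic_map T T g"
  using G_Homeo unfolding Homeo_def by blast

lemma G_fixes_outside: "g \<in> G \<Longrightarrow> x \<notin> topspace T \<Longrightarrow> g x = x"
  using G_Homeo unfolding Homeo_def by blast

lemma G_bij: "g \<in> G \<Longrightarrow> bij g"
  by (rule bij_if_homeomorphic_fixing_outside[OF G_homeomorphic G_fixes_outside])

lemma G_inj: "g \<in> G \<Longrightarrow> inj g"
  using G_bij bij_is_inj by blast

lemma G_inv_f [simp]: "g \<in> G \<Longrightarrow> inv g (g x) = x"
  using G_inj inv_f_f by metis

lemma G_f_inv [simp]: "g \<in> G \<Longrightarrow> g (inv g x) = x"
  using G_bij bij_is_surj surj_f_inv_f by metis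

lemma G_image_inv_image [simp]: "g \<in> G \<Longrightarrow> g ` (inv g ` A) = A"
  by (simp add: image_comp)

lemma G_inv_image_image [simp]: "g \<in> G \<Longrightarrow> inv g ` (g ` A) = A"
  by (simp add: image_comp)

lemma G_inv_comp_self: "g \<in> G \<Longrightarrow> inv g \<circ> g = id"
  by (simp add: fun_eq_iff)

lemma G_comp_inv_self: "g \<in> G \<Longrightarrow> g \<circ> inv g = id"
  by (simp add: fun_eq_iff)

lemma G_inv_inv: "g \<in> G \<Longrightarrow> inv (inv g) = g"
  using G_bij inv_inv_eq by blast

lemma G_inv_comp: "g \<in> G \<Longrightarrow> h \<in> G \<Longrightarrow> inv (g \<circ> h) = inv h \<circ> inv g"
  using G_bij o_inv_distrib by blast

lemma G_image_topspace: "g \<in> G \<Longrightarrow> g ` topspace T = topspace T"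
  using G_homeomorphic homeomorphic_imp_surjective_map by blast

lemma G_in_topspace_iff:
  assumes "g \<in> G"
  shows "g x \<in> topspace T \<longleftrightarrow> x \<in> topspace T"
proof (cases "x \<in> topspace T")
  case True
  then show ?thesis
    using G_image_topspace[OF assms] by blast
next
  case False
  then show ?thesis
    using G_fixes_outside[OF assms False] by simp
qed

lemma clopen_subset: "A \<in> clopens T \<Longrightarrow> A \<subseteq> topspace T"
  unfolding clopens_def using openin_subset by blast

lemma clopen_empty [simp]: "{} \<in> clopens T"
  unfolding clopens_def by simp

lemma clopen_diff: "A \<in> clopens T \<Longrightarrow> B \<in> clopens T \<Longrightarrow> A - B \<in> clopens T"
  unfolding clopens_def by (auto intro: openin_diff closedin_diff)

lemma clopen_topspace [simp]: "topspace T \<in> clopens T"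
  unfolding clopens_def by simp

lemma clopen_compl: "A \<in> clopens T \<Longrightarrow> topspace T - A \<in> clopens T"
  by (simp add: clopen_diff)

lemma clopen_symdiff:
  assumes "A \<in> clopens T" "B \<in> clopens T"
  shows "symdiff A B \<in> clopens T"
  using clopen_diff[OF assms] clopen_diff[OF assms(2,1)]
  unfolding symdiff_def clopens_def by (blast intro: openin_Un closedin_Un)

lemma clopen_image:
  assumes "g \<in> G" "A \<in> clopens T"
  shows "g ` A \<in> clopens T"
  using assms(2) clopen_subset[OF assms(2)] homeomorphic_map_openness[OF G_homeomorphic[OF assms(1)]]
    homeomorphic_map_closedness[OF G_homeomorphic[OF assms(1)]]
  unfolding clopens_def by simp

lemma clopen_inv_image: "g \<in> G \<Longrightarrow> A \<in> clopens T \<Longrightarrow> inv g ` A \<in> clopens T"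
  using clopen_image G_inv by blast

lemma image_symdiff: "inj f \<Longrightarrow> f ` symdiff A B = symdiff (f ` A) (f ` B)"
  by (simp add: symdiff_def image_Un image_set_diff)

lemma compact_topspace: "compactin T (topspace T)"
  using stone unfolding stone_space_def compact_space_def by blast

lemma clopen_compact: "A \<in> clopens T \<Longrightarrow> compactin T A"
  using closed_compactin[OF compact_topspace] clopen_subset unfolding clopens_def by blast

lemma clopen_base: "openin T U \<Longrightarrow> x \<in> U \<Longrightarrow> \<exists>C\<in>clopens T. x \<in> C \<and> C \<subseteq> U"
  using stone unfolding stone_space_def clopens_def by blast

lemma clopen_separates_points:
  assumes "x \<in> topspace T" "y \<in> topspace T" "x \<noteq> y"
  shows "\<exists>C\<in>clopens T. x \<in> C \<and> y \<notin> C"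
proof -
  have "Hausdorff_space T"
    using stone stone_space_def by blast
  then obtain U V where "openin T U" "openin T V" "x \<in> U" "y \<in> V" "disjnt U V"
    using assms unfolding Hausdorff_space_def by blast
  moreover obtain C where "C \<in> clopens T" "x \<in> C" "C \<subseteq> U"
    using clopen_base \<open>openin T U\<close> \<open>x \<in> U\<close> by blast
  ultimately show ?thesis
    by (auto simp: disjnt_def)
qed

lemma clopen_between:
  assumes "compactin T K" "openin T U" "K \<subseteq> U"
  shows "\<exists>C\<in>clopens T. K \<subseteq> C \<and> C \<subseteq> U"
proof -
  let ?U = "{C \<in> clopens T. C \<subseteq> U}"
  have "\<forall>C\<in>?U. openin T C" "K \<subseteq> \<Union>?U"
    using assms clopen_base unfolding clopens_def by blast+
  then obtain F where F: "finite F" "F \<subseteq> ?U" "K \<subseteq> \<Union>F"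
    using assms(1) unfolding compactin_def by meson
  then have "\<Union>F \<in> clopens T"
    unfolding clopens_def by (auto intro!: openin_Union closedin_Union)
  then show ?thesis
    using F by blast
qed

lemma G_eq_if_same_on_clopens:
  assumes g: "g \<in> G" and h: "h \<in> G"
    and same: "\<And>A. A \<in> clopens T \<Longrightarrow> g ` A = h ` A"
  shows "g = h"
proof
  fix x
  show "g x = h x"
  proof (cases "x \<in> topspace T")
    case True
    show ?thesis
    proof (rule ccontr)
      assume "g x \<noteq> h x"
      moreover have "g x \<in> topspace T" "h x \<in> topspace T"
        using True G_in_topspace_iff g h by blast+
      ultimately obtain C where C: "C \<in> clopens T" "g x \<in> C" "h x \<notin> C"
        using clopen_separates_points by blast
      have "x \<in> inv g ` C"
        using C(2) g by (metis G_inv_f imageI)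
      moreover have "h ` (inv g ` C) = C"
        using same[OF clopen_inv_image[OF g C(1)]] g by simp
      ultimately show False
        using C(3) by blast
    qed
  next
    case False
    then show ?thesis
      using G_fixes_outside[OF g False] G_fixes_outside[OF h False] by simp
  qed
qed

subsection \<open>The topology of \<open>G\<close>: a neighbourhood base given by finitely many clopens\<close>

lemma topspace_Gtop [simp]: "topspace (Gtop T G) = G"
proof -
  let ?S = "{{g \<in> Homeo T. g ` K \<subseteq> U} | K U. compactin T K \<and> openin T U}"
  have "Homeo T \<in> ?S"
    by (rule CollectI, rule exI[of _ "{}"], rule exI[of _ "topspace T"]) auto
  moreover have "\<Union>?S \<subseteq> Homeo T"
    by blast
  ultimately have "topspace (compact_open_homeo T) = Homeo T"
    unfolding compact_open_homeo_def topology_generated_by_topspace by blast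
  then show ?thesis
    unfolding Gtop_def using G_Homeo by auto
qed

text \<open>A bijection of the space maps \<open>A\<close> onto \<open>B\<close> iff it maps \<open>A\<close> into \<open>B\<close> and the
  complement of \<open>A\<close> into the complement of \<open>B\<close>; for clopen \<open>A\<close>, \<open>B\<close> both conditions
  are compact-open conditions.\<close>
lemma G_image_eq_iff:
  assumes g: "g \<in> G" and B: "B \<subseteq> topspace T"
  shows "g ` A = B \<longleftrightarrow> g ` A \<subseteq> B \<and> g ` (topspace T - A) \<subseteq> topspace T - B"
proof
  assume gA: "g ` A = B"
  have "g ` (topspace T - A) \<subseteq> topspace T - g ` A"
    using G_in_topspace_iff[OF g] G_inj[OF g] by (auto simp: inj_eq)
  then show "g ` A \<subseteq> B \<and> g ` (topspace T - A) \<subseteq> topspace T - B"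
    using gA by simp
next
  assume sub: "g ` A \<subseteq> B \<and> g ` (topspace T - A) \<subseteq> topspace T - B"
  have "B \<subseteq> g ` A"
  proof
    fix b assume b: "b \<in> B"
    then have "b \<in> topspace T"
      using B by blast
    then have "inv g b \<in> topspace T"
      using G_in_topspace_iff[OF g, of "inv g b"] g by simp
    moreover have "b = g (inv g b)"
      using g by simp
    ultimately have "inv g b \<in> A"
      using sub b by blast
    then show "b \<in> g ` A"
      using \<open>b = g (inv g b)\<close> by blast
  qed
  then show "g ` A = B"
    using sub by blast
qed

lemma openin_Gtop_transporter:
  assumes A: "A \<in> clopens T" and B: "B \<in> clopens T"
  shows "openin (Gtop T G) {g \<in> G. g ` A = B}"
proof -
  let ?S = "{{g \<in> Homeo T. g ` K \<subseteq> U} | K U. compactin T K \<and> openin T U}"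
  let ?S1 = "{g \<in> Homeo T. g ` A \<subseteq> B}"
  let ?S2 = "{g \<in> Homeo T. g ` (topspace T - A) \<subseteq> topspace T - B}"
  have "compactin T A" "openin T B" "compactin T (topspace T - A)" "openin T (topspace T - B)"
    using A B clopen_compact clopen_compl unfolding clopens_def by blast+
  then have S1: "?S1 \<in> ?S" and S2: "?S2 \<in> ?S"
    by blast+
  have "openin (compact_open_homeo T) (?S1 \<inter> ?S2)"
    unfolding compact_open_homeo_def
    by (rule openin_Int[OF topology_generated_by_Basis[OF S1] topology_generated_by_Basis[OF S2]])
  moreover have "{g \<in> G. g ` A = B} = (?S1 \<inter> ?S2) \<inter> G"
  proof (rule set_eqI)
    fix g
    show "g \<in> {g \<in> G. g ` A = B} \<longleftrightarrow> g \<in> (?S1 \<inter> ?S2) \<inter> G"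
    proof (cases "g \<in> G")
      case True
      then show ?thesis
        using G_image_eq_iff[OF True clopen_subset[OF B]] G_Homeo[OF True] by simp
    qed simp
  qed
  ultimately show ?thesis
    unfolding Gtop_def openin_subtopology by blast
qed

definition G_nbhd :: "('a \<Rightarrow> 'a) \<Rightarrow> 'a set set \<Rightarrow> ('a \<Rightarrow> 'a) set" where
  "G_nbhd g F = {g' \<in> G. \<forall>A\<in>F. g' ` A = g ` A}"

lemma G_nbhd_self: "g \<in> G \<Longrightarrow> g \<in> G_nbhd g F"
  unfolding G_nbhd_def by blast

lemma G_nbhd_subset: "G_nbhd g F \<subseteq> G"
  unfolding G_nbhd_def by blast

lemma G_nbhd_antimono: "F \<subseteq> F' \<Longrightarrow> G_nbhd g F' \<subseteq> G_nbhd g F"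
  unfolding G_nbhd_def by blast

lemma G_nbhd_open:
  assumes "finite F" "F \<subseteq> clopens T" "g \<in> G"
  shows "openin (Gtop T G) (G_nbhd g F)"
proof -
  have "openin (Gtop T G) ((\<Inter>A\<in>F. {g' \<in> G. g' ` A = g ` A}) \<inter> topspace (Gtop T G))"
    using assms by (intro openin_INT openin_Gtop_transporter clopen_image) auto
  moreover have "(\<Inter>A\<in>F. {g' \<in> G. g' ` A = g ` A}) \<inter> topspace (Gtop T G) = G_nbhd g F"
    unfolding G_nbhd_def by auto
  ultimately show ?thesis by simp
qed

lemma G_nbhd_iff_fixes:
  assumes g: "g \<in> G"
  shows "g' \<in> G_nbhd g F \<longleftrightarrow> g' \<in> G \<and> (\<forall>A\<in>F. (inv g \<circ> g') ` A = A)"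
proof -
  have "(inv g \<circ> g') ` A = A \<longleftrightarrow> g' ` A = g ` A" for A
  proof
    assume "(inv g \<circ> g') ` A = A"
    then have "g ` (inv g ` (g' ` A)) = g ` A"
      by (simp add: image_comp)
    then show "g' ` A = g ` A"
      using g by simp
  next
    assume "g' ` A = g ` A"
    then have "inv g ` (g' ` A) = A"
      using g by simp
    then show "(inv g \<circ> g') ` A = A"
      by (simp add: image_comp)
  qed
  then show ?thesis
    unfolding G_nbhd_def by simp
qed

text \<open>A subbasic compact-open neighbourhood of \<open>g\<close> contains some \<open>G_nbhd g {A}\<close>: a clopen set
  lies between the compact set \<open>g K\<close> and the open set \<open>W\<close>.\<close>
lemma G_nbhd_inside_subbasic:
  assumes K: "compactin T K" and W: "openin T W" and g: "g \<in> G" and gK: "g ` K \<subseteq> W"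
  shows "\<exists>A\<in>clopens T. G_nbhd g {A} \<subseteq> {g' \<in> Homeo T. g' ` K \<subseteq> W}"
proof -
  have "compactin T (g ` K)"
    using image_compactin[OF K homeomorphic_imp_continuous_map[OF G_homeomorphic[OF g]]] .
  then obtain C where C: "C \<in> clopens T" "g ` K \<subseteq> C" "C \<subseteq> W"
    using clopen_between[OF _ W gK] by blast
  have "K = inv g ` (g ` K)"
    using g by simp
  also have "\<dots> \<subseteq> inv g ` C"
    using C(2) by (rule image_mono)
  finally have "K \<subseteq> inv g ` C" .
  have "G_nbhd g {inv g ` C} \<subseteq> {g' \<in> Homeo T. g' ` K \<subseteq> W}"
  proof
    fix g' assume "g' \<in> G_nbhd g {inv g ` C}"
    then have g': "g' \<in> G" "g' ` (inv g ` C) = g ` (inv g ` C)"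
      unfolding G_nbhd_def by blast+
    have "g' ` K \<subseteq> g' ` (inv g ` C)"
      using \<open>K \<subseteq> inv g ` C\<close> by (rule image_mono)
    also have "\<dots> = C"
      using g'(2) G_image_inv_image[OF g] by (rule trans)
    also have "\<dots> \<subseteq> W"
      by (rule C(3))
    finally show "g' \<in> {g' \<in> Homeo T. g' ` K \<subseteq> W}"
      using G_Homeo[OF g'(1)] by blast
  qed
  then show ?thesis
    using clopen_inv_image[OF g C(1)] by blast
qed

lemma openin_Gtop_iff:
  "openin (Gtop T G) U \<longleftrightarrow>
     U \<subseteq> G \<and> (\<forall>g\<in>U. \<exists>F. finite F \<and> F \<subseteq> clopens T \<and> G_nbhd g F \<subseteq> U)"
proof
  assume U: "U \<subseteq> G \<and> (\<forall>g\<in>U. \<exists>F. finite F \<and> F \<subseteq> clopens T \<and> G_nbhd g F \<subseteq> U)"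
  show "openin (Gtop T G) U"
  proof (subst openin_subopen, intro ballI)
    fix g assume g: "g \<in> U"
    then obtain F where F: "finite F" "F \<subseteq> clopens T" "G_nbhd g F \<subseteq> U"
      using U by blast
    have "g \<in> G"
      using U g by blast
    then show "\<exists>V. openin (Gtop T G) V \<and> g \<in> V \<and> V \<subseteq> U"
      using G_nbhd_open[OF F(1,2)] G_nbhd_self F(3) by blast
  qed
next
  assume "openin (Gtop T G) U"
  then obtain V where V: "openin (compact_open_homeo T) V" "U = V \<inter> G"
    unfolding Gtop_def openin_subtopology by blast
  have base: "\<forall>g\<in>V. g \<in> G \<longrightarrow> (\<exists>F. finite F \<and> F \<subseteq> clopens T \<and> G_nbhd g F \<subseteq> V)"
  proof (rule generate_topology_on_local_base)
    show "generate_topology_on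
        {{g \<in> Homeo T. g ` K \<subseteq> W} | K W. compactin T K \<and> openin T W} V"
      using V(1) unfolding compact_open_homeo_def by (simp add: openin_topology_generated_by_iff)
  next
    fix s g
    assume "s \<in> {{g \<in> Homeo T. g ` K \<subseteq> W} | K W. compactin T K \<and> openin T W}"
      and "g \<in> s" "g \<in> G"
    then obtain K W where K: "compactin T K" and W: "openin T W" and gK: "g ` K \<subseteq> W"
      and s: "s = {g \<in> Homeo T. g ` K \<subseteq> W}"
      by blast
    obtain A where "A \<in> clopens T" "G_nbhd g {A} \<subseteq> s"
      using G_nbhd_inside_subbasic[OF K W \<open>g \<in> G\<close> gK] unfolding s by blast
    then show "\<exists>F. finite F \<and> F \<subseteq> clopens T \<and> G_nbhd g F \<subseteq> s"
      by (intro exI[of _ "{A}"]) simp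
  qed (rule G_nbhd_antimono)
  show "U \<subseteq> G \<and> (\<forall>g\<in>U. \<exists>F. finite F \<and> F \<subseteq> clopens T \<and> G_nbhd g F \<subseteq> U)"
  proof (intro conjI ballI)
    show "U \<subseteq> G"
      using V(2) by blast
    fix g assume "g \<in> U"
    then obtain F where "finite F" "F \<subseteq> clopens T" "G_nbhd g F \<subseteq> V"
      using base V(2) by blast
    moreover have "G_nbhd g F \<subseteq> G"
      by (rule G_nbhd_subset)
    ultimately show "\<exists>F. finite F \<and> F \<subseteq> clopens T \<and> G_nbhd g F \<subseteq> U"
      using V(2) by blast
  qed
qed

lemma dualV_symdiff:
  "f \<in> dualV T \<Longrightarrow> A \<in> clopens T \<Longrightarrow> B \<in> clopens T \<Longrightarrow> f (symdiff A B) = (f A \<noteq> f B)"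
  unfolding dualV_def by blast

lemma dualV_outside: "f \<in> dualV T \<Longrightarrow> A \<notin> clopens T \<Longrightarrow> f A = False"
  unfolding dualV_def by blast

lemma dualV_I:
  "(\<And>A B. A \<in> clopens T \<Longrightarrow> B \<in> clopens T \<Longrightarrow> f (symdiff A B) = (f A \<noteq> f B)) \<Longrightarrow>
   (\<And>A. A \<notin> clopens T \<Longrightarrow> f A = False) \<Longrightarrow> f \<in> dualV T"
  unfolding dualV_def by blast

lemma zero_in_dualV: "(\<lambda>A. False) \<in> dualV T"
  by (rule dualV_I) auto

lemma dual_add_in_dualV:
  assumes "f \<in> dualV T" "h \<in> dualV T"
  shows "dual_add f h \<in> dualV T"
proof (rule dualV_I)
  fix A B assume "A \<in> clopens T" "B \<in> clopens T"
  then show "dual_add f h (symdiff A B) = (dual_add f h A \<noteq> dual_add f h B)"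
    using dualV_symdiff[OF assms(1)] dualV_symdiff[OF assms(2)] unfolding dual_add_def by auto
next
  fix A assume "A \<notin> clopens T"
  then show "dual_add f h A = False"
    using dualV_outside assms unfolding dual_add_def by auto
qed

lemma dual_add_cancel [simp]: "dual_add (dual_add u y) y = u"
  unfolding dual_add_def by (auto simp: fun_eq_iff)

lemma symdiff_cancel [simp]: "symdiff (symdiff A B) B = A"
  unfolding symdiff_def by auto

lemma topspace_dualV_top [simp]: "topspace (dualV_top T) = dualV T"
proof -
  have "dualV T = {f \<in> dualV T. f {} = False}"
    using dualV_symdiff[of _ "{}" "{}"] by (auto simp: symdiff_def)
  then have "dualV T \<in> {{f \<in> dualV T. f A = b} | A b. A \<in> clopens T}"
    by (intro CollectI exI[of _ "{}"] exI[of _ False]) simp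
  then show ?thesis
    unfolding dualV_top_def by auto
qed

lemma openin_dualV_top_basic: "A \<in> clopens T \<Longrightarrow> openin (dualV_top T) {f \<in> dualV T. f A = b}"
  unfolding dualV_top_def by (rule topology_generated_by_Basis) blast

lemma continuous_map_into_dualV_top:
  assumes into: "\<And>x. x \<in> topspace X \<Longrightarrow> f x \<in> dualV T"
    and coord: "\<And>A b. A \<in> clopens T \<Longrightarrow> openin X {x \<in> topspace X. f x A = b}"
  shows "continuous_map X (dualV_top T) f"
  unfolding dualV_top_def
proof (rule continuous_on_generated_topo)
  fix U assume "U \<in> {{f \<in> dualV T. f A = b} | A b. A \<in> clopens T}"
  then obtain A b where U: "U = {f \<in> dualV T. f A = b}" and A: "A \<in> clopens T"
    by blast
  have "f -` U \<inter> topspace X = {x \<in> topspace X. f x A = b}"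
    using into unfolding U by auto
  then show "openin X (f -` U \<inter> topspace X)"
    using coord[OF A] by simp
next
  show "f ` topspace X \<subseteq> \<Union> {{f \<in> dualV T. f A = b} | A b. A \<in> clopens T}"
    using into topspace_dualV_top unfolding dualV_top_def by auto
qed

definition dual_box :: "('a set \<Rightarrow> bool) \<Rightarrow> 'a set set \<Rightarrow> ('a set \<Rightarrow> bool) set" where
  "dual_box u F = {u' \<in> dualV T. \<forall>A\<in>F. u' A = u A}"

lemma dual_box_self: "u \<in> dualV T \<Longrightarrow> u \<in> dual_box u F"
  unfolding dual_box_def by simp

lemma dual_box_antimono: "F \<subseteq> F' \<Longrightarrow> dual_box u F' \<subseteq> dual_box u F"
  unfolding dual_box_def by blast

lemma dual_box_open:
  assumes "finite F" "F \<subseteq> clopens T"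
  shows "openin (dualV_top T) (dual_box u F)"
proof -
  have "openin (dualV_top T) ((\<Inter>A\<in>F. {f \<in> dualV T. f A = u A}) \<inter> topspace (dualV_top T))"
    using assms by (intro openin_INT openin_dualV_top_basic) auto
  moreover have "(\<Inter>A\<in>F. {f \<in> dualV T. f A = u A}) \<inter> topspace (dualV_top T) = dual_box u F"
    unfolding dual_box_def by auto
  ultimately show ?thesis by simp
qed

lemma openin_dualV_top_box:
  assumes W: "openin (dualV_top T) W" and u: "u \<in> W"
  shows "\<exists>F. finite F \<and> F \<subseteq> clopens T \<and> dual_box u F \<subseteq> W"
proof -
  have "\<forall>u\<in>W. True \<longrightarrow> (\<exists>F. finite F \<and> F \<subseteq> clopens T \<and> dual_box u F \<subseteq> W)"
  proof (rule generate_topology_on_local_base)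
    show "generate_topology_on {{f \<in> dualV T. f A = b} | A b. A \<in> clopens T} W"
      using W unfolding dualV_top_def by (simp add: openin_topology_generated_by_iff)
  next
    fix s u assume "s \<in> {{f \<in> dualV T. f A = b} | A b. A \<in> clopens T}" and "u \<in> s"
    then obtain A b where A: "A \<in> clopens T" and s: "s = {f \<in> dualV T. f A = b}" and "u A = b"
      by blast
    then have "dual_box u {A} \<subseteq> s"
      unfolding dual_box_def by auto
    then show "\<exists>F. finite F \<and> F \<subseteq> clopens T \<and> dual_box u F \<subseteq> s"
      using A by (intro exI[of _ "{A}"]) simp
  qed (rule dual_box_antimono)
  then show ?thesis
    using u by blast
qed

text \<open>\<open>\<delta>\<close> is continuous into \<open>V\<^sup>*\<close>, injective since clopens separate points, and open onto
  its image since clopens form a base: this is part (2) except for equivariance.\<close>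
lemma delta_in_dualV: "delta T x \<in> dualV T"
proof (rule dualV_I)
  fix A B assume "A \<in> clopens T" "B \<in> clopens T"
  then have "symdiff A B \<in> clopens T"
    by (rule clopen_symdiff)
  with \<open>A \<in> clopens T\<close> \<open>B \<in> clopens T\<close>
  show "delta T x (symdiff A B) = (delta T x A \<noteq> delta T x B)"
    unfolding delta_def symdiff_def by auto
qed (simp add: delta_def)

lemma delta_continuous: "continuous_map T (dualV_top T) (delta T)"
proof (rule continuous_map_into_dualV_top)
  fix A b assume A: "A \<in> clopens T"
  have "{x \<in> topspace T. delta T x A = b} = (if b then A else topspace T - A)"
    using A clopen_subset[OF A] unfolding delta_def by auto
  then show "openin T {x \<in> topspace T. delta T x A = b}"
    using A clopen_compl[OF A] unfolding clopens_def by simp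
qed (rule delta_in_dualV)

lemma delta_inj: "inj_on (delta T) (topspace T)"
proof (rule inj_onI)
  fix x y assume x: "x \<in> topspace T" and y: "y \<in> topspace T" and eq: "delta T x = delta T y"
  show "x = y"
  proof (rule ccontr)
    assume "x \<noteq> y"
    then obtain C where C: "C \<in> clopens T" "x \<in> C" "y \<notin> C"
      using clopen_separates_points x y by blast
    have "delta T x C = delta T y C"
      using eq by simp
    then show False
      using C unfolding delta_def by simp
  qed
qed

lemma delta_embedding: "embedding_map T (dualV_top T) (delta T)"
proof (rule embedding_map_by_local_openness[OF delta_continuous delta_inj])
  fix U x assume U: "openin T U" and x: "x \<in> U"
  obtain C where C: "C \<in> clopens T" "x \<in> C" "C \<subseteq> U"
    using clopen_base[OF U x] by blast
  let ?V = "{f \<in> dualV T. f C = True}"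
  have "openin (dualV_top T) ?V"
    by (rule openin_dualV_top_basic[OF C(1)])
  moreover have "delta T x \<in> ?V"
    using C delta_in_dualV unfolding delta_def by simp
  moreover have "\<forall>x'\<in>topspace T. delta T x' \<in> ?V \<longrightarrow> x' \<in> U"
    using C unfolding delta_def by auto
  ultimately show "\<exists>V. openin (dualV_top T) V \<and> delta T x \<in> V \<and>
      (\<forall>x'\<in>topspace T. delta T x' \<in> V \<longrightarrow> x' \<in> U)"
    by blast
qed

lemma topspace_Vtop [simp]: "topspace (Vtop T) = clopens T"
  unfolding Vtop_def by simp

lemma alpha_clopen: "A \<in> clopens T \<Longrightarrow> act_alpha T g A = g ` A"
  by (simp add: act_alpha_def)

lemma alpha_outside: "A \<notin> clopens T \<Longrightarrow> act_alpha T g A = A"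
  by (simp add: act_alpha_def)

lemma alpha_in_clopens: "g \<in> G \<Longrightarrow> A \<in> clopens T \<Longrightarrow> act_alpha T g A \<in> clopens T"
  by (simp add: alpha_clopen clopen_image)

lemma alpha_id: "act_alpha T id = id"
  by (simp add: fun_eq_iff act_alpha_def)

lemma alpha_comp:
  assumes g: "g \<in> G" and h: "h \<in> G"
  shows "act_alpha T (g \<circ> h) = act_alpha T g \<circ> act_alpha T h"
proof
  fix A
  show "act_alpha T (g \<circ> h) A = (act_alpha T g \<circ> act_alpha T h) A"
  proof (cases "A \<in> clopens T")
    case True
    then show ?thesis
      using clopen_image[OF h True] by (simp add: act_alpha_def image_comp)
  next
    case False
    then show ?thesis by (simp add: act_alpha_def)
  qed
qed

lemma alpha_inv:
  assumes g: "g \<in> G"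
  shows "act_alpha T (inv g) = inv (act_alpha T g)"
proof -
  have "act_alpha T g \<circ> act_alpha T (inv g) = id" "act_alpha T (inv g) \<circ> act_alpha T g = id"
    using alpha_comp[OF g G_inv[OF g]] alpha_comp[OF G_inv[OF g] g]
      G_comp_inv_self[OF g] G_inv_comp_self[OF g] alpha_id by simp_all
  then show ?thesis
    by (rule inv_unique_comp[symmetric])
qed

lemma alpha_inv_cancel [simp]:
  assumes g: "g \<in> G"
  shows "act_alpha T g (act_alpha T (inv g) A) = A" "act_alpha T (inv g) (act_alpha T g A) = A"
  using fun_cong[OF alpha_comp[OF g G_inv[OF g]], of A] fun_cong[OF alpha_comp[OF G_inv[OF g] g], of A]
    G_comp_inv_self[OF g] G_inv_comp_self[OF g] alpha_id by simp_all

lemma alpha_symdiff: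
  assumes g: "g \<in> G" and A: "A \<in> clopens T" and B: "B \<in> clopens T"
  shows "act_alpha T g (symdiff A B) = symdiff (act_alpha T g A) (act_alpha T g B)"
  using clopen_symdiff[OF A B] A B image_symdiff[OF G_inj[OF g]] by (simp add: alpha_clopen)

lemma alpha_Aut:
  assumes g: "g \<in> G"
  shows "act_alpha T g \<in> Aut (Vtop T) symdiff"
  unfolding Aut_def
proof (intro CollectI conjI ballI allI impI)
  have "homeomorphic_maps (Vtop T) (Vtop T) (act_alpha T g) (act_alpha T (inv g))"
    unfolding homeomorphic_maps_def Vtop_def
    using g G_inv alpha_in_clopens by (auto simp: Pi_iff)
  then show "homeomorphic_map (Vtop T) (Vtop T) (act_alpha T g)"
    using homeomorphic_map_maps by blast
next
  fix x y assume "x \<in> topspace (Vtop T)" "y \<in> topspace (Vtop T)"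
  then show "act_alpha T g (symdiff x y) = symdiff (act_alpha T g x) (act_alpha T g y)"
    using alpha_symdiff[OF g] by simp
next
  fix y assume "y \<notin> topspace (Vtop T)"
  then show "act_alpha T g y = y"
    by (simp add: alpha_outside)
qed

lemma alpha_inj: "inj_on (act_alpha T) G"
proof (rule inj_onI)
  fix g h assume g: "g \<in> G" and h: "h \<in> G" and eq: "act_alpha T g = act_alpha T h"
  show "g = h"
  proof (rule G_eq_if_same_on_clopens[OF g h])
    fix A assume "A \<in> clopens T"
    then show "g ` A = h ` A"
      using fun_cong[OF eq, of A] by (simp add: alpha_clopen)
  qed
qed

text \<open>The action on the discrete group \<open>V\<close> is continuous: near \<open>(g, A)\<close> it is constant on
  the open box \<open>G_nbhd g {A} \<times> {A}\<close>.\<close>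
lemma alpha_continuous:
  "continuous_map (prod_topology (Gtop T G) (Vtop T)) (Vtop T) (\<lambda>(g, A). act_alpha T g A)"
  unfolding Vtop_def
proof (rule continuous_map_into_discrete_topology)
  fix p assume "p \<in> topspace (prod_topology (Gtop T G) (discrete_topology (clopens T)))"
  then obtain g A where p: "p = (g, A)" and g: "g \<in> G" and A: "A \<in> clopens T"
    by auto
  show "(case p of (g, A) \<Rightarrow> act_alpha T g A) \<in> clopens T"
    using alpha_in_clopens[OF g A] p by simp
  have "openin (prod_topology (Gtop T G) (discrete_topology (clopens T))) (G_nbhd g {A} \<times> {A})"
    using G_nbhd_open[of "{A}" g] g A by (simp add: openin_prod_Times_iff)
  moreover have "p \<in> G_nbhd g {A} \<times> {A}"
    using p G_nbhd_self[OF g] by simp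
  moreover have "\<forall>p'\<in>G_nbhd g {A} \<times> {A}.
      (case p' of (g, A) \<Rightarrow> act_alpha T g A) = (case p of (g, A) \<Rightarrow> act_alpha T g A)"
  proof
    fix p' assume "p' \<in> G_nbhd g {A} \<times> {A}"
    then obtain g' where "p' = (g', A)" "g' ` A = g ` A"
      unfolding G_nbhd_def by blast
    then show "(case p' of (g, A) \<Rightarrow> act_alpha T g A) = (case p of (g, A) \<Rightarrow> act_alpha T g A)"
      using p A by (simp add: alpha_clopen)
  qed
  ultimately show "\<exists>U. openin (prod_topology (Gtop T G) (discrete_topology (clopens T))) U \<and> p \<in> U \<and>
      (\<forall>p'\<in>U. (case p' of (g, A) \<Rightarrow> act_alpha T g A) = (case p of (g, A) \<Rightarrow> act_alpha T g A))"
    by blast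
qed

lemma beta_apply: "f \<in> dualV T \<Longrightarrow> A \<in> clopens T \<Longrightarrow> act_beta T g f A = f (inv g ` A)"
  by (simp add: act_beta_def)

lemma beta_apply_outside: "f \<in> dualV T \<Longrightarrow> A \<notin> clopens T \<Longrightarrow> act_beta T g f A = False"
  by (simp add: act_beta_def)

lemma beta_outside: "f \<notin> dualV T \<Longrightarrow> act_beta T g f = f"
  by (simp add: act_beta_def)

lemma beta_in_dualV:
  assumes g: "g \<in> G" and f: "f \<in> dualV T"
  shows "act_beta T g f \<in> dualV T"
proof (rule dualV_I)
  fix A B assume A: "A \<in> clopens T" and B: "B \<in> clopens T"
  then show "act_beta T g f (symdiff A B) = (act_beta T g f A \<noteq> act_beta T g f B)"
    using clopen_symdiff[OF A B] clopen_inv_image[OF g] dualV_symdiff[OF f]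
      image_symdiff[OF G_inj[OF G_inv[OF g]]] f
    by (simp add: beta_apply)
next
  fix A assume "A \<notin> clopens T"
  then show "act_beta T g f A = False"
    using f by (simp add: beta_apply_outside)
qed

lemma beta_id: "act_beta T id = id"
proof
  fix f
  show "act_beta T id f = id f"
  proof (cases "f \<in> dualV T")
    case True
    then show ?thesis
      using dualV_outside[OF True] by (auto simp: act_beta_def fun_eq_iff)
  next
    case False
    then show ?thesis by (simp add: beta_outside)
  qed
qed

lemma beta_comp:
  assumes g: "g \<in> G" and h: "h \<in> G"
  shows "act_beta T (g \<circ> h) = act_beta T g \<circ> act_beta T h"
proof
  fix f
  show "act_beta T (g \<circ> h) f = (act_beta T g \<circ> act_beta T h) f"
  proof (cases "f \<in> dualV T")
    case True
    have hf: "act_beta T h f \<in> dualV T"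
      by (rule beta_in_dualV[OF h True])
    show ?thesis
    proof
      fix A
      show "act_beta T (g \<circ> h) f A = (act_beta T g \<circ> act_beta T h) f A"
      proof (cases "A \<in> clopens T")
        case A: True
        have "act_beta T (g \<circ> h) f A = f (inv h ` (inv g ` A))"
          using G_inv_comp[OF g h] True A by (simp add: beta_apply image_comp)
        also have "\<dots> = act_beta T g (act_beta T h f) A"
          using clopen_inv_image[OF g A] True hf A by (simp add: beta_apply)
        finally show ?thesis by simp
      next
        case False
        then show ?thesis
          using True hf by (simp add: beta_apply_outside)
      qed
    qed
  next
    case False
    then show ?thesis by (simp add: beta_outside)
  qed
qed

lemma beta_inv:
  assumes g: "g \<in> G"
  shows "act_beta T (inv g) = inv (act_beta T g)"
proof -
  have "act_beta T g \<circ> act_beta T (inv g) = id" "act_beta T (inv g) \<circ> act_beta T g = id"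
    using beta_comp[OF g G_inv[OF g]] beta_comp[OF G_inv[OF g] g]
      G_comp_inv_self[OF g] G_inv_comp_self[OF g] beta_id by simp_all
  then show ?thesis
    by (rule inv_unique_comp[symmetric])
qed

lemma beta_inv_cancel [simp]:
  assumes g: "g \<in> G"
  shows "act_beta T g (act_beta T (inv g) f) = f" "act_beta T (inv g) (act_beta T g f) = f"
  using fun_cong[OF beta_comp[OF g G_inv[OF g]], of f] fun_cong[OF beta_comp[OF G_inv[OF g] g], of f]
    G_comp_inv_self[OF g] G_inv_comp_self[OF g] beta_id by simp_all

lemma beta_continuous_single:
  assumes g: "g \<in> G"
  shows "continuous_map (dualV_top T) (dualV_top T) (act_beta T g)"
proof (rule continuous_map_into_dualV_top)
  fix A b assume A: "A \<in> clopens T"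
  have "{f \<in> topspace (dualV_top T). act_beta T g f A = b} = {f \<in> dualV T. f (inv g ` A) = b}"
    using A by (auto simp: beta_apply)
  then show "openin (dualV_top T) {f \<in> topspace (dualV_top T). act_beta T g f A = b}"
    using openin_dualV_top_basic[OF clopen_inv_image[OF g A]] by simp
qed (use beta_in_dualV[OF g] in simp)

lemma beta_additive:
  assumes "g \<in> G" and f: "f \<in> dualV T" and h: "h \<in> dualV T"
  shows "act_beta T g (dual_add f h) = dual_add (act_beta T g f) (act_beta T g h)"
  using dual_add_in_dualV[OF f h] f h unfolding act_beta_def dual_add_def by (auto simp: fun_eq_iff)

lemma beta_Aut:
  assumes g: "g \<in> G"
  shows "act_beta T g \<in> Aut (dualV_top T) dual_add"
  unfolding Aut_def
proof (intro CollectI conjI ballI allI impI)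
  have "homeomorphic_maps (dualV_top T) (dualV_top T) (act_beta T g) (act_beta T (inv g))"
    unfolding homeomorphic_maps_def
    using beta_continuous_single[OF g] beta_continuous_single[OF G_inv[OF g]] g by simp
  then show "homeomorphic_map (dualV_top T) (dualV_top T) (act_beta T g)"
    using homeomorphic_map_maps by blast
next
  fix x y assume "x \<in> topspace (dualV_top T)" "y \<in> topspace (dualV_top T)"
  then show "act_beta T g (dual_add x y) = dual_add (act_beta T g x) (act_beta T g y)"
    using beta_additive[OF g] by simp
next
  fix y assume "y \<notin> topspace (dualV_top T)"
  then show "act_beta T g y = y"
    by (simp add: beta_outside)
qed

lemma delta_equivariant:
  assumes g: "g \<in> G" and x: "x \<in> topspace T"
  shows "delta T (g x) = act_beta T g (delta T x)"
proof
  fix A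
  show "delta T (g x) A = act_beta T g (delta T x) A"
  proof (cases "A \<in> clopens T")
    case True
    have "x \<in> inv g ` A \<longleftrightarrow> g x \<in> A"
      using g by (metis G_image_inv_image G_inv_f imageI image_eqI)
    then show ?thesis
      using True delta_in_dualV clopen_inv_image[OF g True] by (simp add: beta_apply delta_def)
  next
    case False
    then show ?thesis
      using delta_in_dualV by (simp add: beta_apply_outside delta_def)
  qed
qed

text \<open>\<open>\<beta>\<close> is faithful, since \<open>\<delta>\<close> is injective and equivariant.\<close>
lemma beta_inj: "inj_on (act_beta T) G"
proof (rule inj_onI)
  fix g h assume g: "g \<in> G" and h: "h \<in> G" and eq: "act_beta T g = act_beta T h"
  show "g = h"
  proof
    fix x
    show "g x = h x"
    proof (cases "x \<in> topspace T")
      case True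
      then have "delta T (g x) = delta T (h x)"
        using delta_equivariant[OF g True] delta_equivariant[OF h True] eq by simp
      moreover have "g x \<in> topspace T" "h x \<in> topspace T"
        using True G_in_topspace_iff g h by blast+
      ultimately show ?thesis
        using delta_inj inj_onD by metis
    next
      case False
      then show ?thesis
        using G_fixes_outside[OF g False] G_fixes_outside[OF h False] by simp
    qed
  qed
qed

text \<open>Joint continuity of \<open>\<beta>\<close>: the coordinate \<open>(g f)(A) = f(g\<^sup>-\<^sup>1 A)\<close> is constant on the
  open box \<open>G_nbhd g {g\<^sup>-\<^sup>1 A} \<times> {f'. f'(g\<^sup>-\<^sup>1 A) = f(g\<^sup>-\<^sup>1 A)}\<close>.\<close>
lemma beta_continuous:
  "continuous_map (prod_topology (Gtop T G) (dualV_top T)) (dualV_top T) (\<lambda>(g, f). act_beta T g f)"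
proof (rule continuous_map_into_dualV_top)
  fix p assume "p \<in> topspace (prod_topology (Gtop T G) (dualV_top T))"
  then show "(case p of (g, f) \<Rightarrow> act_beta T g f) \<in> dualV T"
    using beta_in_dualV by auto
next
  fix A b assume A: "A \<in> clopens T"
  let ?P = "{p \<in> topspace (prod_topology (Gtop T G) (dualV_top T)).
              (case p of (g, f) \<Rightarrow> act_beta T g f) A = b}"
  show "openin (prod_topology (Gtop T G) (dualV_top T)) ?P"
    unfolding openin_prod_topology_alt
  proof (intro allI impI)
    fix g f assume "(g, f) \<in> ?P"
    then have g: "g \<in> G" and f: "f \<in> dualV T" and fb: "f (inv g ` A) = b"
      using A by (auto simp: beta_apply)
    let ?A = "inv g ` A"
    have A': "?A \<in> clopens T"
      by (rule clopen_inv_image[OF g A])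
    let ?U = "G_nbhd g {?A}"
    let ?V = "{f' \<in> dualV T. f' ?A = b}"
    have "?U \<times> ?V \<subseteq> ?P"
    proof
      fix q assume "q \<in> ?U \<times> ?V"
      then obtain g' f' where q: "q = (g', f')" "g' \<in> G" "g' ` ?A = g ` ?A" "f' \<in> dualV T" "f' ?A = b"
        unfolding G_nbhd_def by blast
      have "inv g' ` A = ?A"
        using q(2,3) g by (metis G_image_inv_image G_inv_image_image)
      then show "q \<in> ?P"
        using q A by (simp add: beta_apply)
    qed
    moreover have "openin (Gtop T G) ?U" "openin (dualV_top T) ?V"
      using G_nbhd_open[of "{?A}"] A' g openin_dualV_top_basic[OF A'] by simp_all
    moreover have "g \<in> ?U" "f \<in> ?V"
      using G_nbhd_self[OF g] f fb by simp_all
    ultimately show "\<exists>U V. openin (Gtop T G) U \<and> openin (dualV_top T) V \<and> g \<in> U \<and> f \<in> V \<and>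
        U \<times> V \<subseteq> ?P"
      by blast
  qed
qed

subsection \<open>Criteria for maps from \<open>G\<close> into a Birkhoff topology\<close>

lemma continuous_into_birkhoff_criterion:
  assumes e: "e \<in> topspace Y" and into_Aut: "\<And>g. g \<in> G \<Longrightarrow> i g \<in> Aut Y mul"
    and persist: "\<And>h K W g. h \<in> Aut Y mul \<Longrightarrow> compactin Y K \<Longrightarrow> openin Y W \<Longrightarrow> e \<in> W \<Longrightarrow>
        g \<in> G \<Longrightarrow> inv h \<circ> i g \<in> birkhoff_nbhd Y mul K W \<Longrightarrow>
        \<exists>F. finite F \<and> F \<subseteq> clopens T \<and> (\<forall>g'\<in>G_nbhd g F. inv h \<circ> i g' \<in> birkhoff_nbhd Y mul K W)"
  shows "continuous_map (Gtop T G) (birkhoff_top Y mul e) i"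
proof (rule continuous_map_into_birkhoff_top[OF e])
  show "\<And>g. g \<in> topspace (Gtop T G) \<Longrightarrow> i g \<in> Aut Y mul"
    using into_Aut by simp
  fix h K W assume h: "h \<in> Aut Y mul" and K: "compactin Y K" and W: "openin Y W" "e \<in> W"
  let ?N = "birkhoff_nbhd Y mul K W"
  let ?P = "{g \<in> topspace (Gtop T G). i g \<in> (\<lambda>k. h \<circ> k) ` ?N}"
  have mem: "i g \<in> (\<lambda>k. h \<circ> k) ` ?N \<longleftrightarrow> inv h \<circ> i g \<in> ?N" for g
    by (rule translate_image_iff[OF Aut_bij[OF h]])
  show "openin (Gtop T G) ?P"
    unfolding openin_Gtop_iff
  proof (intro conjI ballI)
    show "?P \<subseteq> G" by simp
    fix g assume "g \<in> ?P"
    then have g: "g \<in> G" and gN: "inv h \<circ> i g \<in> ?N"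
      using mem by simp_all
    obtain F where F: "finite F" "F \<subseteq> clopens T"
      and FN: "\<forall>g'\<in>G_nbhd g F. inv h \<circ> i g' \<in> ?N"
      using persist[OF h K W g gN] by blast
    have "G_nbhd g F \<subseteq> ?P"
    proof
      fix g' assume "g' \<in> G_nbhd g F"
      then show "g' \<in> ?P"
        using FN G_nbhd_subset mem by auto
    qed
    then show "\<exists>F. finite F \<and> F \<subseteq> clopens T \<and> G_nbhd g F \<subseteq> ?P"
      using F by blast
  qed
qed

lemma G_nbhd_if_translate_small:
  assumes g: "g \<in> G" and g': "g' \<in> G" and bij: "bij (i g)"
    and hom: "\<And>g h. g \<in> G \<Longrightarrow> h \<in> G \<Longrightarrow> i (g \<circ> h) = i g \<circ> i h"
    and hom_inv: "\<And>g. g \<in> G \<Longrightarrow> i (inv g) = inv (i g)"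
    and small: "\<forall>k\<in>G. i k \<in> N \<longrightarrow> (\<forall>A\<in>F. k ` A = A)"
    and g'N: "i g' \<in> (\<lambda>k. i g \<circ> k) ` N"
  shows "g' \<in> G_nbhd g F"
proof -
  have "inv (i g) \<circ> i g' \<in> N"
    using translate_image_iff[OF bij] g'N by blast
  moreover have "inv (i g) \<circ> i g' = i (inv g \<circ> g')"
    using hom[OF G_inv[OF g] g'] hom_inv[OF g] by simp
  ultimately have kN: "i (inv g \<circ> g') \<in> N"
    by simp
  have kG: "inv g \<circ> g' \<in> G"
    by (rule G_comp[OF G_inv[OF g] g'])
  have "\<forall>A\<in>F. (inv g \<circ> g') ` A = A"
  proof
    fix A assume "A \<in> F"
    then show "(inv g \<circ> g') ` A = A"
      by (rule small[rule_format, OF kG kN])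
  qed
  then show ?thesis
    using G_nbhd_iff_fixes[OF g] g' by simp
qed

lemma embedding_into_birkhoff_criterion:
  assumes cont: "continuous_map (Gtop T G) (birkhoff_top Y mul e) i"
    and e: "e \<in> topspace Y" and neutral: "\<And>y. y \<in> topspace Y \<Longrightarrow> mul e y = y"
    and inj: "inj_on i G"
    and hom: "\<And>g h. g \<in> G \<Longrightarrow> h \<in> G \<Longrightarrow> i (g \<circ> h) = i g \<circ> i h"
    and hom_inv: "\<And>g. g \<in> G \<Longrightarrow> i (inv g) = inv (i g)"
    and small: "\<And>F. finite F \<Longrightarrow> F \<subseteq> clopens T \<Longrightarrow>
        \<exists>K W. compactin Y K \<and> openin Y W \<and> e \<in> W \<and>
          (\<forall>k\<in>G. i k \<in> birkhoff_nbhd Y mul K W \<longrightarrow> (\<forall>A\<in>F. k ` A = A))"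
  shows "embedding_map (Gtop T G) (birkhoff_top Y mul e) i"
proof (rule embedding_map_by_local_openness[OF cont])
  show "inj_on i (topspace (Gtop T G))"
    using inj by simp
  fix U g assume U: "openin (Gtop T G) U" and gU: "g \<in> U"
  then have g: "g \<in> G" and "\<exists>F. finite F \<and> F \<subseteq> clopens T \<and> G_nbhd g F \<subseteq> U"
    unfolding openin_Gtop_iff by blast+
  then obtain F where F: "finite F" "F \<subseteq> clopens T" "G_nbhd g F \<subseteq> U"
    by blast
  obtain K W where K: "compactin Y K" and W: "openin Y W" "e \<in> W"
    and small_F: "\<forall>k\<in>G. i k \<in> birkhoff_nbhd Y mul K W \<longrightarrow> (\<forall>A\<in>F. k ` A = A)"
    using small[OF F(1,2)] by blast
  let ?V = "(\<lambda>k. i g \<circ> k) ` birkhoff_nbhd Y mul K W"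
  have ig: "i g \<in> Aut Y mul"
    using continuous_map_image_subset_topspace[OF cont] g topspace_birkhoff_top[OF e] by auto
  have bij: "bij (i g)"
    by (rule Aut_bij[OF ig])
  have "id \<in> birkhoff_nbhd Y mul K W"
    using neutral compactin_subset_topspace[OF K] W(2) by (intro birkhoff_nbhd_id) auto
  then have "inv (i g) \<circ> i g \<in> birkhoff_nbhd Y mul K W"
    using inv_o_cancel[OF bij_is_inj[OF bij]] by simp
  then have "i g \<in> ?V"
    by (rule translate_image_iff[OF bij, THEN iffD2])
  moreover have "openin (birkhoff_top Y mul e) ?V"
    by (rule birkhoff_basis_open[OF ig K W])
  moreover have "g' \<in> U" if "g' \<in> topspace (Gtop T G)" "i g' \<in> ?V" for g'
    using G_nbhd_if_translate_small[OF g _ bij hom hom_inv small_F] that F(3) by auto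
  ultimately show "\<exists>V. openin (birkhoff_top Y mul e) V \<and> i g \<in> V \<and>
      (\<forall>g'\<in>topspace (Gtop T G). i g' \<in> V \<longrightarrow> g' \<in> U)"
    by blast
qed

lemma alpha_agree_near:
  "g' \<in> G_nbhd g F \<Longrightarrow> A \<in> F \<Longrightarrow> A \<in> clopens T \<Longrightarrow> act_alpha T g' A = act_alpha T g A"
  unfolding G_nbhd_def by (simp add: alpha_clopen)

text \<open>If \<open>i\<^sub>\<alpha>(g)\<close> lies in \<open>h N(K, W)\<close> then so does \<open>i\<^sub>\<alpha>(g')\<close> for every \<open>g'\<close> that moves the
  finitely many clopens \<open>K \<union> g\<^sup>-\<^sup>1 h(K)\<close> as \<open>g\<close> does: both conditions of
  \<open>birkhoff_translate_nbhd_iff\<close> are then literally unchanged.\<close>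
lemma alpha_birkhoff_continuous:
  "continuous_map (Gtop T G) (birkhoff_top (Vtop T) symdiff {}) (act_alpha T)"
proof (rule continuous_into_birkhoff_criterion)
  show "{} \<in> topspace (Vtop T)" by simp
  show "\<And>g. g \<in> G \<Longrightarrow> act_alpha T g \<in> Aut (Vtop T) symdiff"
    by (rule alpha_Aut)
next
  fix h K W g
  assume h: "h \<in> Aut (Vtop T) symdiff" and K: "compactin (Vtop T) K" and g: "g \<in> G"
    and gN: "inv h \<circ> act_alpha T g \<in> birkhoff_nbhd (Vtop T) symdiff K W"
  have iff: "inv h \<circ> act_alpha T g' \<in> birkhoff_nbhd (Vtop T) symdiff K W \<longleftrightarrow>
      (\<forall>y\<in>K. symdiff (inv h (act_alpha T g' y)) y \<in> W \<and>
              symdiff (act_alpha T (inv g') (h y)) y \<in> W)" if "g' \<in> G" for g'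
    using that by (intro birkhoff_translate_nbhd_iff[OF symdiff_cancel h alpha_Aut]) simp_all
  have Kc: "finite K" "K \<subseteq> clopens T"
    using K unfolding Vtop_def compactin_discrete_topology by auto
  let ?z = "\<lambda>y. act_alpha T (inv g) (h y)"
  let ?F = "K \<union> ?z ` K"
  have "h y \<in> clopens T" if "y \<in> K" for y
    using Aut_maps_topspace[OF h, of y] that Kc by auto
  then have F: "finite ?F" "?F \<subseteq> clopens T"
    using Kc alpha_in_clopens[OF G_inv[OF g]] by auto
  have "inv h \<circ> act_alpha T g' \<in> birkhoff_nbhd (Vtop T) symdiff K W" if g': "g' \<in> G_nbhd g ?F" for g'
  proof -
    have g'G: "g' \<in> G"
      using g' G_nbhd_subset by blast
    have "act_alpha T g' y = act_alpha T g y" "act_alpha T (inv g') (h y) = ?z y" if y: "y \<in> K" for y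
    proof -
      show "act_alpha T g' y = act_alpha T g y"
        using alpha_agree_near[OF g'] y F(2) by blast
      have "act_alpha T g' (?z y) = act_alpha T g (?z y)"
        using alpha_agree_near[OF g'] y F(2) by blast
      then have "act_alpha T g' (?z y) = h y"
        using g by simp
      then show "act_alpha T (inv g') (h y) = ?z y"
        using alpha_inv_cancel(2)[OF g'G, of "?z y"] by simp
    qed
    then show ?thesis
      using gN iff[OF g] iff[OF g'G] by simp
  qed
  then show "\<exists>F. finite F \<and> F \<subseteq> clopens T \<and>
      (\<forall>g'\<in>G_nbhd g F. inv h \<circ> act_alpha T g' \<in> birkhoff_nbhd (Vtop T) symdiff K W)"
    using F by (intro exI[of _ ?F]) blast
qed

text \<open>The neighbourhood \<open>N(F, {\<emptyset>})\<close> consists of the automorphisms fixing every member of \<open>F\<close>.\<close>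
lemma alpha_birkhoff_embedding:
  "embedding_map (Gtop T G) (birkhoff_top (Vtop T) symdiff {}) (act_alpha T)"
proof (rule embedding_into_birkhoff_criterion[OF alpha_birkhoff_continuous])
  show "{} \<in> topspace (Vtop T)" by simp
  show "\<And>y. symdiff {} y = y" by (simp add: symdiff_def)
  show "inj_on (act_alpha T) G" by (rule alpha_inj)
  show "\<And>g h. g \<in> G \<Longrightarrow> h \<in> G \<Longrightarrow> act_alpha T (g \<circ> h) = act_alpha T g \<circ> act_alpha T h"
    by (rule alpha_comp)
  show "\<And>g. g \<in> G \<Longrightarrow> act_alpha T (inv g) = inv (act_alpha T g)"
    by (rule alpha_inv)
next
  fix F assume F: "finite F" "F \<subseteq> clopens T"
  have "k ` A = A" if "act_alpha T k \<in> birkhoff_nbhd (Vtop T) symdiff F {{}}" "A \<in> F" for k A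
  proof -
    have "\<forall>y\<in>F. symdiff (act_alpha T k y) y \<in> {{}}"
      using that(1) birkhoff_nbhd_involutive_iff[where mul = symdiff and f = "act_alpha T k"
          and Y = "Vtop T" and K = F and W = "{{}}", OF symdiff_cancel] by blast
    then have "symdiff (act_alpha T k A) A = {}"
      using that(2) by blast
    then have "act_alpha T k A = A"
      unfolding symdiff_def by blast
    moreover have "A \<in> clopens T"
      using that(2) F(2) by blast
    ultimately show ?thesis
      by (simp add: alpha_clopen)
  qed
  moreover have "compactin (Vtop T) F" "openin (Vtop T) {{}}"
    using F unfolding Vtop_def compactin_discrete_topology by auto
  ultimately show "\<exists>K W. compactin (Vtop T) K \<and> openin (Vtop T) W \<and> {} \<in> W \<and>
      (\<forall>k\<in>G. act_alpha T k \<in> birkhoff_nbhd (Vtop T) symdiff K W \<longrightarrow> (\<forall>A\<in>F. k ` A = A))"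
    by blast
qed

subsection \<open>Uniformity estimates in \<open>V\<^sup>*\<close>\<close>

lemma dual_add_self: "dual_add y y = (\<lambda>A. False)"
  by (simp add: dual_add_def)

lemma dual_add_box:
  assumes "u \<in> dualV T" "y \<in> dualV T" and agree: "\<forall>A\<in>F. u A = v A"
  shows "dual_add u y \<in> dual_box (dual_add v y) F"
  using dual_add_in_dualV[OF assms(1,2)] agree unfolding dual_box_def dual_add_def by simp

lemma continuous_map_dual_add_id:
  assumes p: "continuous_map (dualV_top T) (dualV_top T) p"
  shows "continuous_map (dualV_top T) (dualV_top T) (\<lambda>y. dual_add (p y) y)"
proof (rule continuous_map_into_dualV_top)
  have pD: "p y \<in> dualV T" if "y \<in> dualV T" for y
    using continuous_map_image_subset_topspace[OF p] that by auto
  show "\<And>y. y \<in> topspace (dualV_top T) \<Longrightarrow> dual_add (p y) y \<in> dualV T"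
    using pD dual_add_in_dualV by simp
  fix A b assume A: "A \<in> clopens T"
  let ?P = "{y \<in> topspace (dualV_top T). dual_add (p y) y A = b}"
  show "openin (dualV_top T) ?P"
  proof (subst openin_subopen, intro ballI)
    fix y0 assume y0: "y0 \<in> ?P"
    let ?Q1 = "{y \<in> topspace (dualV_top T). p y \<in> {f \<in> dualV T. f A = p y0 A}}"
    let ?Q2 = "{f \<in> dualV T. f A = y0 A}"
    have "openin (dualV_top T) (?Q1 \<inter> ?Q2)"
      by (intro openin_Int openin_continuous_map_preimage[OF p] openin_dualV_top_basic A)
    moreover have "y0 \<in> ?Q1 \<inter> ?Q2"
      using y0 pD by simp
    moreover have "?Q1 \<inter> ?Q2 \<subseteq> ?P"
      using y0 unfolding dual_add_def by auto
    ultimately show "\<exists>U. openin (dualV_top T) U \<and> y0 \<in> U \<and> U \<subseteq> ?P"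
      by blast
  qed
qed

lemma compact_uniform_box:
  assumes K: "compactin (dualV_top T) K" and W: "openin (dualV_top T) W"
    and phi: "continuous_map (dualV_top T) (dualV_top T) \<phi>" and into: "\<forall>y\<in>K. \<phi> y \<in> W"
  shows "\<exists>F. finite F \<and> F \<subseteq> clopens T \<and> (\<forall>y\<in>K. dual_box (\<phi> y) F \<subseteq> W)"
proof -
  have "\<forall>y\<in>K. \<exists>F. finite F \<and> F \<subseteq> clopens T \<and> dual_box (\<phi> y) F \<subseteq> W"
    using openin_dualV_top_box[OF W] into by blast
  from bchoice[OF this] obtain Fy
    where Fy: "\<forall>y\<in>K. finite (Fy y) \<and> Fy y \<subseteq> clopens T \<and> dual_box (\<phi> y) (Fy y) \<subseteq> W"
    by blast
  define Nb where "Nb y = {z \<in> topspace (dualV_top T). \<phi> z \<in> dual_box (\<phi> y) (Fy y)}" for y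
  have "openin (dualV_top T) (Nb y)" if "y \<in> K" for y
    unfolding Nb_def using Fy that by (intro openin_continuous_map_preimage[OF phi] dual_box_open) auto
  then have "\<forall>U\<in>Nb ` K. openin (dualV_top T) U"
    by blast
  moreover have "y \<in> Nb y" if "y \<in> K" for y
    using that compactin_subset_topspace[OF K] continuous_map_image_subset_topspace[OF phi]
    unfolding Nb_def by (auto intro: dual_box_self)
  then have "K \<subseteq> \<Union>(Nb ` K)"
    by blast
  ultimately obtain V where V: "finite V" "V \<subseteq> Nb ` K" "K \<subseteq> \<Union>V"
    using K unfolding compactin_def by meson
  obtain K0 where K0: "K0 \<subseteq> K" "finite K0" "V = Nb ` K0"
    using finite_subset_image[OF V(1) V(2)] by blast
  let ?F = "\<Union>(Fy ` K0)"
  have "dual_box (\<phi> y) ?F \<subseteq> W" if y: "y \<in> K" for y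
  proof -
    obtain y0 where y0: "y0 \<in> K0" "y \<in> Nb y0"
      using V(3) K0(3) y by blast
    have "\<phi> y A = \<phi> y0 A" if "A \<in> Fy y0" for A
      using y0(2) that unfolding Nb_def dual_box_def by auto
    then have "dual_box (\<phi> y) ?F \<subseteq> dual_box (\<phi> y0) (Fy y0)"
      using y0(1) unfolding dual_box_def by auto
    then show ?thesis
      using Fy y0(1) K0(1) by blast
  qed
  moreover have "finite ?F" "?F \<subseteq> clopens T"
    using K0 Fy by auto
  ultimately show ?thesis
    by blast
qed

lemma Aut_dual_uniformly_continuous:
  assumes h: "h \<in> Aut (dualV_top T) dual_add" and F: "finite F" "F \<subseteq> clopens T"
  shows "\<exists>F'. finite F' \<and> F' \<subseteq> clopens T \<and>
           (\<forall>u\<in>dualV T. \<forall>v\<in>dualV T. (\<forall>A\<in>F'. u A = v A) \<longrightarrow> (\<forall>A\<in>F. h u A = h v A))"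
proof -
  let ?Q = "{u \<in> topspace (dualV_top T). h u \<in> dual_box (\<lambda>A. False) F}"
  have "h (dual_add (\<lambda>A. False) (\<lambda>A. False)) = dual_add (h (\<lambda>A. False)) (h (\<lambda>A. False))"
    using Aut_additive[OF h] zero_in_dualV by simp
  then have zero: "h (\<lambda>A. False) = (\<lambda>A. False)"
    by (simp only: dual_add_self)
  have Q: "openin (dualV_top T) ?Q"
    by (rule openin_continuous_map_preimage[OF Aut_continuous[OF h] dual_box_open[OF F]])
  have "(\<lambda>A. False) \<in> ?Q"
    using zero zero_in_dualV dual_box_self by simp
  then obtain F' where F': "finite F'" "F' \<subseteq> clopens T" "dual_box (\<lambda>A. False) F' \<subseteq> ?Q"
    using openin_dualV_top_box[OF Q] by blast
  have "\<forall>A\<in>F. h u A = h v A"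
    if u: "u \<in> dualV T" and v: "v \<in> dualV T" and agree: "\<forall>A\<in>F'. u A = v A" for u v
  proof -
    have "dual_add u v \<in> dual_box (\<lambda>A. False) F'"
      using dual_add_in_dualV[OF u v] agree unfolding dual_box_def dual_add_def by simp
    then have "h (dual_add u v) \<in> dual_box (\<lambda>A. False) F"
      using F'(3) by blast
    moreover have "h (dual_add u v) = dual_add (h u) (h v)"
      using Aut_additive[OF h] u v by simp
    ultimately show ?thesis
      unfolding dual_box_def dual_add_def by simp
  qed
  then show ?thesis
    using F'(1,2) by (intro exI[of _ F']) blast
qed

lemma beta_agree_near:
  assumes g: "g \<in> G" and g': "g' \<in> G_nbhd g ((\<lambda>A. inv g ` A) ` F)" and A: "A \<in> F" "A \<in> clopens T"
    and f: "f \<in> dualV T"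
  shows "act_beta T g' f A = act_beta T g f A"
proof -
  have g'G: "g' \<in> G" and "g' ` (inv g ` A) = g ` (inv g ` A)"
    using g' A(1) unfolding G_nbhd_def by blast+
  then have "g' ` (inv g ` A) = A"
    by (simp only: G_image_inv_image[OF g])
  then have "inv g' ` (g' ` (inv g ` A)) = inv g' ` A"
    by (rule arg_cong)
  then have "inv g' ` A = inv g ` A"
    by (simp only: G_inv_image_image[OF g'G])
  then show ?thesis
    using f A(2) by (simp add: beta_apply)
qed

lemma beta_inv_agree_near:
  assumes g: "g \<in> G" and g': "g' \<in> G_nbhd g F" and A: "A \<in> F" "A \<in> clopens T"
    and f: "f \<in> dualV T"
  shows "act_beta T (inv g') f A = act_beta T (inv g) f A"
proof -
  have "g' \<in> G" "g' ` A = g ` A"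
    using g' A(1) unfolding G_nbhd_def by blast+
  then show ?thesis
    using f A(2) g by (simp add: beta_apply G_inv_inv)
qed

lemma beta_translate_nbhd_iff:
  assumes h: "h \<in> Aut (dualV_top T) dual_add" and g: "g \<in> G"
  shows "inv h \<circ> act_beta T g \<in> birkhoff_nbhd (dualV_top T) dual_add K W \<longleftrightarrow>
    (\<forall>y\<in>K. dual_add (inv h (act_beta T g y)) y \<in> W \<and>
            dual_add (act_beta T (inv g) (h y)) y \<in> W)"
  using g by (intro birkhoff_translate_nbhd_iff[OF dual_add_cancel h beta_Aut]) simp_all

lemma beta_translate_nbhd_room:
  assumes h: "h \<in> Aut (dualV_top T) dual_add" and K: "compactin (dualV_top T) K"
    and W: "openin (dualV_top T) W" and g: "g \<in> G"
    and gN: "inv h \<circ> act_beta T g \<in> birkhoff_nbhd (dualV_top T) dual_add K W"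
  shows "\<exists>F. finite F \<and> F \<subseteq> clopens T \<and>
    (\<forall>y\<in>K. dual_box (dual_add (inv h (act_beta T g y)) y) F \<subseteq> W \<and>
            dual_box (dual_add (act_beta T (inv g) (h y)) y) F \<subseteq> W)"
proof -
  let ?\<phi> = "\<lambda>y. dual_add (inv h (act_beta T g y)) y"
  let ?\<psi> = "\<lambda>y. dual_add (act_beta T (inv g) (h y)) y"
  have "continuous_map (dualV_top T) (dualV_top T) (inv h \<circ> act_beta T g)"
    "continuous_map (dualV_top T) (dualV_top T) (act_beta T (inv g) \<circ> h)"
    using continuous_map_compose[OF beta_continuous_single[OF g] Aut_continuous[OF Aut_inv[OF h]]]
      continuous_map_compose[OF Aut_continuous[OF h] beta_continuous_single[OF G_inv[OF g]]]
    by simp_all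
  then have cont: "continuous_map (dualV_top T) (dualV_top T) ?\<phi>"
    "continuous_map (dualV_top T) (dualV_top T) ?\<psi>"
    using continuous_map_dual_add_id by (simp_all add: o_def)
  have into: "\<forall>y\<in>K. ?\<phi> y \<in> W" "\<forall>y\<in>K. ?\<psi> y \<in> W"
    using gN beta_translate_nbhd_iff[OF h g] by simp_all
  obtain Fa where Fa: "finite Fa" "Fa \<subseteq> clopens T" "\<forall>y\<in>K. dual_box (?\<phi> y) Fa \<subseteq> W"
    using compact_uniform_box[OF K W cont(1) into(1)] by blast
  obtain Fb where Fb: "finite Fb" "Fb \<subseteq> clopens T" "\<forall>y\<in>K. dual_box (?\<psi> y) Fb \<subseteq> W"
    using compact_uniform_box[OF K W cont(2) into(2)] by blast
  have "dual_box u (Fa \<union> Fb) \<subseteq> dual_box u Fa" "dual_box u (Fa \<union> Fb) \<subseteq> dual_box u Fb" for u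
    by (simp_all add: dual_box_antimono)
  then show ?thesis
    using Fa Fb by (intro exI[of _ "Fa \<union> Fb"]) blast
qed

text \<open>Uniform continuity of \<open>h\<^sup>-\<^sup>1\<close> and the agreement lemmas for \<open>\<beta>\<close> show that for \<open>g'\<close> near
  \<open>g\<close> the functionals in both conditions only change outside the room \<open>F\<close>.\<close>
lemma beta_birkhoff_persist:
  assumes h: "h \<in> Aut (dualV_top T) dual_add" and K: "compactin (dualV_top T) K"
    and W: "openin (dualV_top T) W" and g: "g \<in> G"
    and gN: "inv h \<circ> act_beta T g \<in> birkhoff_nbhd (dualV_top T) dual_add K W"
  shows "\<exists>F. finite F \<and> F \<subseteq> clopens T \<and>
           (\<forall>g'\<in>G_nbhd g F. inv h \<circ> act_beta T g' \<in> birkhoff_nbhd (dualV_top T) dual_add K W)"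
proof -
  have ih: "inv h \<in> Aut (dualV_top T) dual_add"
    by (rule Aut_inv[OF h])
  obtain F where F: "finite F" "F \<subseteq> clopens T"
    and room: "\<forall>y\<in>K. dual_box (dual_add (inv h (act_beta T g y)) y) F \<subseteq> W \<and>
                      dual_box (dual_add (act_beta T (inv g) (h y)) y) F \<subseteq> W"
    using beta_translate_nbhd_room[OF h K W g gN] by blast
  obtain F' where F': "finite F'" "F' \<subseteq> clopens T"
    and unif: "\<forall>u\<in>dualV T. \<forall>v\<in>dualV T. (\<forall>A\<in>F'. u A = v A) \<longrightarrow> (\<forall>A\<in>F. inv h u A = inv h v A)"
    using Aut_dual_uniformly_continuous[OF ih F] by blast
  let ?F = "F \<union> (\<lambda>A. inv g ` A) ` F'"
  have "inv h \<circ> act_beta T g' \<in> birkhoff_nbhd (dualV_top T) dual_add K W"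
    if g': "g' \<in> G_nbhd g ?F" for g'
  proof -
    have g'G: "g' \<in> G"
      using g' G_nbhd_subset by blast
    have near1: "g' \<in> G_nbhd g ((\<lambda>A. inv g ` A) ` F')" and near2: "g' \<in> G_nbhd g F"
      using g' G_nbhd_antimono by blast+
    have "dual_add (inv h (act_beta T g' y)) y \<in> W \<and> dual_add (act_beta T (inv g') (h y)) y \<in> W"
      if y: "y \<in> K" for y
    proof
      have yD: "y \<in> dualV T" and hyD: "h y \<in> dualV T"
        using y compactin_subset_topspace[OF K] Aut_maps_topspace[OF h] by auto
      have room_y: "dual_box (dual_add (inv h (act_beta T g y)) y) F \<subseteq> W"
        "dual_box (dual_add (act_beta T (inv g) (h y)) y) F \<subseteq> W"
        using room y by blast+
      have "\<forall>A\<in>F'. act_beta T g' y A = act_beta T g y A"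
        using beta_agree_near[OF g near1 _ _ yD] F'(2) by blast
      then have "\<forall>A\<in>F. inv h (act_beta T g' y) A = inv h (act_beta T g y) A"
        using unif beta_in_dualV[OF g'G yD] beta_in_dualV[OF g yD] by blast
      moreover have "inv h (act_beta T g' y) \<in> dualV T"
        using Aut_maps_topspace[OF ih] beta_in_dualV[OF g'G yD] by simp
      ultimately show "dual_add (inv h (act_beta T g' y)) y \<in> W"
        using dual_add_box[OF _ yD] room_y(1) by blast
      have "\<forall>A\<in>F. act_beta T (inv g') (h y) A = act_beta T (inv g) (h y) A"
        using beta_inv_agree_near[OF g near2 _ _ hyD] F(2) by blast
      then show "dual_add (act_beta T (inv g') (h y)) y \<in> W"
        using dual_add_box[OF beta_in_dualV[OF G_inv[OF g'G] hyD] yD] room_y(2) by blast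
    qed
    then show ?thesis
      using beta_translate_nbhd_iff[OF h g'G] by simp
  qed
  moreover have "finite ?F" "?F \<subseteq> clopens T"
    using F F' clopen_inv_image[OF g] by auto
  ultimately show ?thesis
    by blast
qed

lemma beta_birkhoff_continuous:
  "continuous_map (Gtop T G) (birkhoff_top (dualV_top T) dual_add (\<lambda>A. False)) (act_beta T)"
proof (rule continuous_into_birkhoff_criterion)
  show "(\<lambda>A. False) \<in> topspace (dualV_top T)"
    using zero_in_dualV by simp
  show "\<And>g. g \<in> G \<Longrightarrow> act_beta T g \<in> Aut (dualV_top T) dual_add"
    by (rule beta_Aut)
qed (rule beta_birkhoff_persist)

lemma G_fixes_if_preserves:
  assumes k: "k \<in> G" and A: "A \<subseteq> topspace T"
    and pres: "\<And>x. x \<in> topspace T \<Longrightarrow> k x \<in> A \<longleftrightarrow> x \<in> A"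
  shows "k ` A = A"
proof
  show "k ` A \<subseteq> A"
    using pres A by blast
  show "A \<subseteq> k ` A"
  proof
    fix a assume a: "a \<in> A"
    have "a \<in> topspace T"
      using a A by blast
    then have "k (inv k a) \<in> topspace T"
      using k by simp
    then have "inv k a \<in> topspace T"
      using G_in_topspace_iff[OF k] by blast
    then have "inv k a \<in> A"
      using pres[of "inv k a"] a k by simp
    then show "a \<in> k ` A"
      by (rule rev_image_eqI) (simp add: k)
  qed
qed

text \<open>For \<open>K = \<delta>(X)\<close> and \<open>W\<close> the functionals vanishing on \<open>F\<close>, the neighbourhood \<open>N(K, W)\<close>
  only contains images of elements fixing every member of \<open>F\<close>.\<close>
lemma beta_birkhoff_embedding:
  "embedding_map (Gtop T G) (birkhoff_top (dualV_top T) dual_add (\<lambda>A. False)) (act_beta T)"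
proof (rule embedding_into_birkhoff_criterion[OF beta_birkhoff_continuous])
  show "(\<lambda>A. False) \<in> topspace (dualV_top T)"
    using zero_in_dualV by simp
  show "\<And>y. y \<in> topspace (dualV_top T) \<Longrightarrow> dual_add (\<lambda>A. False) y = y"
    by (simp add: dual_add_def)
  show "inj_on (act_beta T) G"
    by (rule beta_inj)
  show "\<And>g h. g \<in> G \<Longrightarrow> h \<in> G \<Longrightarrow> act_beta T (g \<circ> h) = act_beta T g \<circ> act_beta T h"
    by (rule beta_comp)
  show "\<And>g. g \<in> G \<Longrightarrow> act_beta T (inv g) = inv (act_beta T g)"
    by (rule beta_inv)
next
  fix F assume F: "finite F" "F \<subseteq> clopens T"
  let ?K = "delta T ` topspace T"
  let ?W = "dual_box (\<lambda>A. False) F"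
  have "k ` A = A"
    if k: "k \<in> G" and kN: "act_beta T k \<in> birkhoff_nbhd (dualV_top T) dual_add ?K ?W"
      and A: "A \<in> F" for k A
  proof (rule G_fixes_if_preserves[OF k])
    show "A \<subseteq> topspace T"
      using A F(2) clopen_subset by blast
    fix x assume x: "x \<in> topspace T"
    have "act_beta T k \<in> birkhoff_nbhd (dualV_top T) dual_add ?K ?W \<longleftrightarrow>
        act_beta T k \<in> Aut (dualV_top T) dual_add \<and>
        (\<forall>y\<in>?K. dual_add (act_beta T k y) y \<in> ?W \<and> dual_add (inv (act_beta T k) y) y \<in> ?W)"
      by (rule birkhoff_nbhd_involutive_iff) (rule dual_add_cancel)
    moreover have "delta T x \<in> ?K"
      using x by blast
    ultimately have "dual_add (act_beta T k (delta T x)) (delta T x) \<in> ?W"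
      using kN by blast
    then have "act_beta T k (delta T x) A = delta T x A"
      using A unfolding dual_box_def dual_add_def by auto
    then have "delta T (k x) A = delta T x A"
      using delta_equivariant[OF k x] by simp
    then show "k x \<in> A \<longleftrightarrow> x \<in> A"
      using A F(2) unfolding delta_def by auto
  qed
  moreover have "compactin (dualV_top T) ?K"
    by (rule image_compactin[OF compact_topspace delta_continuous])
  moreover have "openin (dualV_top T) ?W" "(\<lambda>A. False) \<in> ?W"
    using dual_box_open[OF F] dual_box_self[OF zero_in_dualV] by blast+
  ultimately show "\<exists>K W. compactin (dualV_top T) K \<and> openin (dualV_top T) W \<and> (\<lambda>A. False) \<in> W \<and>
      (\<forall>k\<in>G. act_beta T k \<in> birkhoff_nbhd (dualV_top T) dual_add K W \<longrightarrow> (\<forall>A\<in>F. k ` A = A))"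
    by (intro exI[of _ ?K] exI[of _ ?W]) blast
qed

text \<open>The pairing \<open>w(A, f) = f(A)\<close> is continuous (it is constant on \<open>{A} \<times> {f'. f' A = f A}\<close>)
  and biadditive.\<close>
lemma eval_biadditive:
  "cont_biadditive (Vtop T) symdiff (dualV_top T) dual_add
     (discrete_topology (UNIV :: bool set)) (\<lambda>a b. a \<noteq> b) eval_w"
  unfolding cont_biadditive_def
proof (intro conjI ballI)
  show "continuous_map (prod_topology (Vtop T) (dualV_top T)) (discrete_topology UNIV)
      (\<lambda>(A, f). eval_w A f)"
  proof (rule continuous_map_into_discrete_topology)
    fix p assume "p \<in> topspace (prod_topology (Vtop T) (dualV_top T))"
    then obtain A f where p: "p = (A, f)" and A: "A \<in> clopens T" and f: "f \<in> dualV T"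
      by auto
    let ?U = "{A} \<times> {f' \<in> dualV T. f' A = f A}"
    have "openin (prod_topology (Vtop T) (dualV_top T)) ?U"
      using A openin_dualV_top_basic[OF A] by (simp add: openin_prod_Times_iff Vtop_def)
    moreover have "p \<in> ?U"
      using p f by simp
    moreover have "\<forall>p'\<in>?U. (case p' of (A, f) \<Rightarrow> eval_w A f) = (case p of (A, f) \<Rightarrow> eval_w A f)"
      using p by (auto simp: eval_w_def)
    ultimately show "\<exists>U. openin (prod_topology (Vtop T) (dualV_top T)) U \<and> p \<in> U \<and>
        (\<forall>p'\<in>U. (case p' of (A, f) \<Rightarrow> eval_w A f) = (case p of (A, f) \<Rightarrow> eval_w A f))"
      by blast
  qed simp
next
  fix A B f assume "A \<in> topspace (Vtop T)" "B \<in> topspace (Vtop T)" "f \<in> topspace (dualV_top T)"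
  then show "eval_w (symdiff A B) f = (eval_w A f \<noteq> eval_w B f)"
    using dualV_symdiff by (simp add: eval_w_def)
next
  fix A f f' assume "A \<in> topspace (Vtop T)"
  then show "eval_w A (dual_add f f') = (eval_w A f \<noteq> eval_w A f')"
    by (simp add: eval_w_def dual_add_def)
qed

lemma alpha_action: "cont_action_aut (Gtop T G) (Vtop T) symdiff (act_alpha T)"
  unfolding cont_action_aut_def
  using alpha_continuous alpha_id alpha_comp alpha_symdiff by simp

lemma beta_action: "cont_action_aut (Gtop T G) (dualV_top T) dual_add (act_beta T)"
  unfolding cont_action_aut_def
  using beta_continuous beta_id beta_comp beta_additive by simp

lemma eval_invariant:
  "g \<in> G \<Longrightarrow> A \<in> clopens T \<Longrightarrow> f \<in> dualV T \<Longrightarrow>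
   eval_w (act_alpha T g A) (act_beta T g f) = eval_w A f"
  using alpha_in_clopens by (simp add: eval_w_def beta_apply alpha_clopen)

lemma birep_kernel:
  "{g \<in> topspace (Gtop T G). (\<forall>A\<in>topspace (Vtop T). act_alpha T g A = A) \<and>
      (\<forall>f\<in>topspace (dualV_top T). act_beta T g f = f)} = {id}"
proof (intro equalityI subsetI)
  fix g assume "g \<in> {g \<in> topspace (Gtop T G). (\<forall>A\<in>topspace (Vtop T). act_alpha T g A = A) \<and>
      (\<forall>f\<in>topspace (dualV_top T). act_beta T g f = f)}"
  then have g: "g \<in> G" and fix_all: "\<And>A. A \<in> clopens T \<Longrightarrow> act_alpha T g A = A"
    by auto
  have "g = id"
  proof (rule G_eq_if_same_on_clopens[OF g G_id])
    fix A assume "A \<in> clopens T"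
    then show "g ` A = id ` A"
      using fix_all[of A] alpha_clopen[of A g] by simp
  qed
  then show "g \<in> {id}" by simp
next
  fix g :: "'a \<Rightarrow> 'a" assume "g \<in> {id}"
  then show "g \<in> {g \<in> topspace (Gtop T G). (\<forall>A\<in>topspace (Vtop T). act_alpha T g A = A) \<and>
      (\<forall>f\<in>topspace (dualV_top T). act_beta T g f = f)}"
    using G_id alpha_id beta_id by simp
qed

text \<open>Continuity of \<open>\<alpha>\<close> for a topology \<open>\<sigma>\<close> on \<open>G\<close> makes every transporter
  \<open>{g. g(A) = B}\<close> open: it is the preimage of the open point \<open>B\<close> under \<open>g \<mapsto> g(A)\<close>.\<close>
lemma transporter_open_if_alpha_continuous:
  assumes ts: "topspace \<sigma> = G"
    and cont: "continuous_map (prod_topology \<sigma> (Vtop T)) (Vtop T) (\<lambda>(g, A). act_alpha T g A)"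
    and A: "A \<in> clopens T" and B: "B \<in> clopens T"
  shows "openin \<sigma> {g \<in> G. g ` A = B}"
proof -
  have "continuous_map \<sigma> (prod_topology \<sigma> (Vtop T)) (\<lambda>g. (g, A))"
    using A by (intro continuous_map_pairedI) (simp_all add: continuous_map_id[unfolded id_def])
  then have "continuous_map \<sigma> (Vtop T) ((\<lambda>(g, A). act_alpha T g A) \<circ> (\<lambda>g. (g, A)))"
    using cont by (rule continuous_map_compose)
  then have "continuous_map \<sigma> (Vtop T) (\<lambda>g. act_alpha T g A)"
    by (simp add: o_def)
  then have "openin \<sigma> {g \<in> topspace \<sigma>. act_alpha T g A \<in> {B}}"
    by (rule openin_continuous_map_preimage) (simp add: Vtop_def B)
  moreover have "{g \<in> topspace \<sigma>. act_alpha T g A \<in> {B}} = {g \<in> G. g ` A = B}"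
    using ts alpha_clopen[OF A] by auto
  ultimately show ?thesis by simp
qed

text \<open>Minimality: a topology on \<open>G\<close> in which all transporters are open is at least as
  fine as the compact-open topology, because the sets \<open>G_nbhd g F\<close> are finite intersections
  of transporters.\<close>
lemma Gtop_coarsest_with_open_transporters:
  assumes ts: "topspace \<sigma> = G"
    and transp: "\<And>A B. A \<in> clopens T \<Longrightarrow> B \<in> clopens T \<Longrightarrow> openin \<sigma> {g \<in> G. g ` A = B}"
    and U: "openin (Gtop T G) U"
  shows "openin \<sigma> U"
proof (subst openin_subopen, intro ballI)
  fix g assume gU: "g \<in> U"
  obtain F where F: "finite F" "F \<subseteq> clopens T" "G_nbhd g F \<subseteq> U" and g: "g \<in> G"
    using U gU unfolding openin_Gtop_iff by blast
  have "openin \<sigma> ((\<Inter>A\<in>F. {g' \<in> G. g' ` A = g ` A}) \<inter> topspace \<sigma>)"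
    using F g by (intro openin_INT transp clopen_image) auto
  moreover have "(\<Inter>A\<in>F. {g' \<in> G. g' ` A = g ` A}) \<inter> topspace \<sigma> = G_nbhd g F"
    unfolding G_nbhd_def using ts by auto
  ultimately show "\<exists>V. openin \<sigma> V \<and> g \<in> V \<and> V \<subseteq> U"
    using G_nbhd_self[OF g] F(3) by auto
qed

lemma birep_minimal:
  "\<not> (\<exists>\<sigma>. hausdorff_group_topology (topspace (Gtop T G)) \<sigma> \<and>
        (\<forall>U. openin \<sigma> U \<longrightarrow> openin (Gtop T G) U) \<and> \<sigma> \<noteq> Gtop T G \<and>
        continuous_map (prod_topology \<sigma> (Vtop T)) (Vtop T) (\<lambda>(g, A). act_alpha T g A) \<and>
        continuous_map (prod_topology \<sigma> (dualV_top T)) (dualV_top T) (\<lambda>(g, f). act_beta T g f))"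
proof clarify
  fix \<sigma> assume hg: "hausdorff_group_topology (topspace (Gtop T G)) \<sigma>"
    and coarser: "\<forall>U. openin \<sigma> U \<longrightarrow> openin (Gtop T G) U" and ne: "\<sigma> \<noteq> Gtop T G"
    and cont: "continuous_map (prod_topology \<sigma> (Vtop T)) (Vtop T) (\<lambda>(g, A). act_alpha T g A)"
  have ts: "topspace \<sigma> = G"
    using hg unfolding hausdorff_group_topology_def by simp
  have "openin \<sigma> U \<longleftrightarrow> openin (Gtop T G) U" for U
    using coarser Gtop_coarsest_with_open_transporters[OF ts transporter_open_if_alpha_continuous[OF ts cont]]
    by blast
  then show False
    using ne topology_eq by blast
qed

lemma t_exact: "t_exact_birep (Gtop T G) (Vtop T) symdiff (dualV_top T) dual_add
    (discrete_topology (UNIV :: bool set)) (\<lambda>a b. a \<noteq> b) eval_w (act_alpha T) (act_beta T)"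
  unfolding t_exact_birep_def cont_birep_def
  using eval_biadditive alpha_action beta_action eval_invariant birep_kernel birep_minimal by simp

end

theorem lemma4p3:
  fixes T :: "'a topology" and G :: "('a \<Rightarrow> 'a) set"
  assumes "stone_space T"
    and "topological_subgroup_Homeo T G"
  shows
    "top_group_embedding (Gtop T G) (birkhoff_top (Vtop T) symdiff {})
        (\<lambda>g A. act_alpha T g A) \<and>
     (embedding_map T (dualV_top T) (delta T) \<and>
      (\<forall>g\<in>G. \<forall>x\<in>topspace T. delta T (g x) = act_beta T g (delta T x))) \<and>
     (continuous_map (prod_topology (Gtop T G) (dualV_top T)) (dualV_top T)
        (\<lambda>(g, f). act_beta T g f) \<and>
      top_group_embedding (Gtop T G) (birkhoff_top (dualV_top T) dual_add (\<lambda>A. False))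
        (\<lambda>g f. act_beta T g f)) \<and>
     t_exact_birep (Gtop T G) (Vtop T) symdiff (dualV_top T) dual_add
        (discrete_topology (UNIV :: bool set)) (\<lambda>a b. a \<noteq> b) eval_w
        (act_alpha T) (act_beta T)"
proof -
  interpret stone_group T G
    using assms by unfold_locales
  have "top_group_embedding (Gtop T G) (birkhoff_top (Vtop T) symdiff {}) (act_alpha T)"
    unfolding top_group_embedding_def using alpha_comp alpha_birkhoff_embedding by simp
  moreover have "top_group_embedding (Gtop T G)
      (birkhoff_top (dualV_top T) dual_add (\<lambda>A. False)) (act_beta T)"
    unfolding top_group_embedding_def using beta_comp beta_birkhoff_embedding by simp
  ultimately show ?thesis
    using delta_embedding delta_equivariant beta_continuous t_exact by (simp add: eta_contract_eq)
qed

end
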